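(* Let $c$ be any real number. For each finite-dimensional system $A$ and $\rho\in\mathfrak{S}(A)$ define $\Theta_\rho:\mathfrak{B}(A)\to\mathfrak{B}(A)$ by $\Theta_\rho(M)=\tfrac12\{\rho,M\}+ic[\rho,M]$, and define $\mathcal{E}_{B|A}\star\rho_A:=(\Theta_\rho\otimes\mathrm{id}_B)(\mathscr{D}[\mathcal{E}_{B|A}])$ for channels $\mathcal{E}_{B|A}$ and states $\rho_A$ (with action on subsystems defined by $\mathcal{E}\star\rho_{AE}:=((\mathcal{E}\star\cdot)\otimes\mathrm{id}_E)(\rho_{AE})$). Then $\star$ is a state over time function satisfying axioms (H), (E), (P), (CC), (J) and (QC).
   Context: All systems are finite-dimensional Hilbert spaces; a system may also be a subspace of a larger Hilbert space. $\mathfrak{B}(A)$: linear operators; $\mathfrak{S}(A)$: density operators; $\mathfrak{C}(A,B)$: quantum channels (CPTP maps $\mathfrak{B}(A)\to\mathfrak{B}(B)$). $|A|=\dim A$, $\mathbb{1}_A$ identity (also the projector onto $A$ when $A$ is a subspace), $\pi_A=\mathbb{1}_A/|A|$, $A'$ a copy of $A$, $F_{AA'}$ swap, $\mathrm{Ad}_X(Y)=XYX^\dagger$, $[X,Y]=XY-YX$, $\{X,Y\}=XY+YX$. $\mathcal{E}_{B|A'}$ is $\mathcal{E}_{B|A}$ acting on $A'$. Jamiołkowski state: $\mathscr{D}[\mathcal{E}]=(\mathrm{id}_A\otimes\mathcal{E}_{B|A'})(F_{AA'})$. A state over time function assigns to all systems $A,B$ a map $\star:\mathfrak{C}(A,B)\times\mathfrak{S}(A)\to\mathfrak{B}(A\otimes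 B)$ with $\mathrm{Tr}_A[\mathcal{E}\star\rho]=\mathcal{E}(\rho)$, $\mathrm{Tr}_B[\mathcal{E}\star\rho]=\rho$, extended homogeneously by $(\lambda\mathcal{E})\star\rho=\mathcal{E}\star(\lambda\rho)=\lambda(\mathcal{E}\star\rho)$ (so $\mathcal{E}\star\mathbb{1}_A=|A|\,\mathcal{E}\star\pi_A$). A quantum state over spacetime on $A\otimes E$ is a density operator or an operator of the form $\mathcal{F}\star\sigma$. (H): $\mathcal{E}\star\rho$ is Hermitian for all channels and states. (E): for all $A,B,E$, every quantum state over spacetime $\rho_{AE}$ and channel $\mathcal{E}_{B|A}$, $\mathcal{E}_{B|A}\star\rho_{AE}$ on $A\otimes B\otimes E$ is defined with $\mathcal{I}_E[\mathcal{E}\star\rho_{AE}]=\mathcal{E}\star\mathcal{I}_E(\rho_{AE})$ for every completely positive trace-non-increasing $\mathcal{I}_E$ on $E$, and $\mathrm{Tr}_A[\mathcal{E}\star\rho_{AE}]=(\mathcal{E}\otimes\mathrm{id}_E)(\rho_{AE})$. (P): $\mathrm{Tr}_B[\mathcal{F}_{C|B}\star(\mathcal{E}_{B|A}\star\rho_A)]=(\mathcal{F}\circ\mathcal{E})_{C|A}\star\rho_A$ for all channels $\mathcal{E}_{B|A},\mathcal{F}_{C|B}$ and states $\rho_A$, with $\mathcal{F}_{C|B}\star(\cdot)$ acting on the $B$-part (spectator $A$). (CC): for every orthogonal decomposition $A=\bigoplus_iA_i$, every channel $\mathcal{E}_{B|A}$ with $\mathcal{E}\circ(\sum_i\mathrm{Ad}_{\mathbb{1}_{A_i}})=\mathcal{E}$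 and every probability distribution $\{\lambda_i\}$: $\mathcal{E}\star(\sum_i\lambda_i\pi_{A_i})=\sum_i\lambda_i\,\mathcal{E}_{B|A_i}\star\pi_{A_i}$, with $\mathcal{E}_{B|A_i}=\mathcal{E}\circ\mathrm{Ad}_{\mathbb{1}_{A_i}}$ viewed as a channel from the subspace system $A_i$ to $B$. (J): for every system $A$, including subspaces of larger systems, and every channel: $\mathcal{E}_{B|A}\star\pi_A=|A|^{-1}\mathscr{D}[\mathcal{E}]$. (QC): for every $\rho\in\mathfrak{S}(A)$ there is a linear map $\Theta_\rho$ on $\mathfrak{B}(A)$ with $\mathcal{E}_{B|A}\star\rho_A=(\Theta_\rho\otimes\mathrm{id}_B)(\mathcal{E}_{B|A}\star\mathbb{1}_A)$ for all $\mathcal{E}\in\mathfrak{C}(A,B)$, and $\Theta_\rho(M)=\rho M$ whenever $[\rho,M]=0$. *)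

theory Defs
  imports "Jordan_Normal_Form.Matrix" Complex_Main
begin

text \<open>A system of dimension n is C^n; operators are complex n x n matrices
(JNF type complex mat).  The tensor product C^n (x) C^m is C^(n*m) with the basis
index convention (a,b) |-> a*m+b (Kronecker convention); for three factors
(a,b,c) |-> a*m*k + b*k + c.\<close>

definition adj :: "complex mat \<Rightarrow> complex mat" where
  "adj X = mat (dim_col X) (dim_row X) (\<lambda>(i,j). cnj (X $$ (j,i)))"

definition ctrace :: "complex mat \<Rightarrow> complex" where
  "ctrace X = (\<Sum>i<dim_row X. X $$ (i,i))"

definition kron :: "complex mat \<Rightarrow> complex mat \<Rightarrow> complex mat" where
  "kron X Y = mat (dim_row X * dim_row Y) (dim_col X * dim_col Y)
     (\<lambda>(i,j). X $$ (i div dim_row Y, j div dim_col Y) * Y $$ (i mod dim_row Y, j mod dim_col Y))"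

definition commutator :: "complex mat \<Rightarrow> complex mat \<Rightarrow> complex mat" where
  "commutator X Y = X * Y - Y * X"

definition anticommutator :: "complex mat \<Rightarrow> complex mat \<Rightarrow> complex mat" where
  "anticommutator X Y = X * Y + Y * X"

definition mat_sum :: "nat \<Rightarrow> nat \<Rightarrow> 'i set \<Rightarrow> ('i \<Rightarrow> complex mat) \<Rightarrow> complex mat" where
  "mat_sum n m I f = mat n m (\<lambda>ij. \<Sum>i\<in>I. f i $$ ij)"

definition psd :: "nat \<Rightarrow> complex mat \<Rightarrow> bool" where
  "psd n X \<longleftrightarrow> X \<in> carrier_mat n n \<and>
     (\<forall>v :: nat \<Rightarrow> complex.
        Im (\<Sum>i<n. \<Sum>j<n. cnj (v i) * X $$ (i,j) * v j) = 0 \<and>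
        0 \<le> Re (\<Sum>i<n. \<Sum>j<n. cnj (v i) * X $$ (i,j) * v j))"

definition density :: "nat \<Rightarrow> complex mat \<Rightarrow> bool" where
  "density n \<rho> \<longleftrightarrow> psd n \<rho> \<and> ctrace \<rho> = 1"

definition ptrace_fst :: "nat \<Rightarrow> nat \<Rightarrow> complex mat \<Rightarrow> complex mat" where
  "ptrace_fst n m R = mat m m (\<lambda>(j,l). \<Sum>i<n. R $$ (i*m+j, i*m+l))"

definition ptrace_snd :: "nat \<Rightarrow> nat \<Rightarrow> complex mat \<Rightarrow> complex mat" where
  "ptrace_snd n m R = mat n n (\<lambda>(i,k). \<Sum>j<m. R $$ (i*m+j, k*m+j))"

definition ptrace_mid :: "nat \<Rightarrow> nat \<Rightarrow> nat \<Rightarrow> complex mat \<Rightarrow> complex mat" where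
  "ptrace_mid n m k R = mat (n*k) (n*k) (\<lambda>(p,q).
     \<Sum>j<m. R $$ ((p div k)*(m*k) + j*k + p mod k, (q div k)*(m*k) + j*k + q mod k))"

text \<open>(Phi (x) id_k)(R) for Phi : B(C^n) -> B(C^m) and R on C^n (x) C^k.\<close>
definition tensor_id_right ::
  "nat \<Rightarrow> nat \<Rightarrow> nat \<Rightarrow> (complex mat \<Rightarrow> complex mat) \<Rightarrow> complex mat \<Rightarrow> complex mat" where
  "tensor_id_right n m k \<Phi> R = mat (m*k) (m*k) (\<lambda>(p,q).
     \<Phi> (mat n n (\<lambda>(i,i'). R $$ (i*k + p mod k, i'*k + q mod k))) $$ (p div k, q div k))"

text \<open>(id_k (x) Phi)(R) for Phi : B(C^n) -> B(C^m) and R on C^k (x) C^n.\<close>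
definition tensor_id_left ::
  "nat \<Rightarrow> nat \<Rightarrow> nat \<Rightarrow> (complex mat \<Rightarrow> complex mat) \<Rightarrow> complex mat \<Rightarrow> complex mat" where
  "tensor_id_left k n m \<Phi> R = mat (k*m) (k*m) (\<lambda>(p,q).
     \<Phi> (mat n n (\<lambda>(i,i'). R $$ ((p div m)*n + i, (q div m)*n + i'))) $$ (p mod m, q mod m))"

definition lin_map :: "nat \<Rightarrow> nat \<Rightarrow> (complex mat \<Rightarrow> complex mat) \<Rightarrow> bool" where
  "lin_map n m \<Phi> \<longleftrightarrow>
     (\<forall>X \<in> carrier_mat n n. \<Phi> X \<in> carrier_mat m m) \<and>
     (\<forall>X \<in> carrier_mat n n. \<forall>Y \<in> carrier_mat n n. \<Phi> (X + Y) = \<Phi> X + \<Phi> Y) \<and>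
     (\<forall>X \<in> carrier_mat n n. \<forall>a. \<Phi> (a \<cdot>\<^sub>m X) = a \<cdot>\<^sub>m \<Phi> X)"

definition cp_map :: "nat \<Rightarrow> nat \<Rightarrow> (complex mat \<Rightarrow> complex mat) \<Rightarrow> bool" where
  "cp_map n m \<Phi> \<longleftrightarrow> lin_map n m \<Phi> \<and>
     (\<forall>k R. psd (n*k) R \<longrightarrow> psd (m*k) (tensor_id_right n m k \<Phi> R))"

definition channel :: "nat \<Rightarrow> nat \<Rightarrow> (complex mat \<Rightarrow> complex mat) \<Rightarrow> bool" where
  "channel n m \<Phi> \<longleftrightarrow> cp_map n m \<Phi> \<and> (\<forall>X \<in> carrier_mat n n. ctrace (\<Phi> X) = ctrace X)"

definition cptni :: "nat \<Rightarrow> (complex mat \<Rightarrow> complex mat) \<Rightarrow> bool" where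
  "cptni n \<Phi> \<longleftrightarrow> cp_map n n \<Phi> \<and> (\<forall>X. psd n X \<longrightarrow> Re (ctrace (\<Phi> X)) \<le> Re (ctrace X))"

text \<open>Swap operator F on C^n (x) C^n, and the Jamiolkowski state (id (x) E)(F).\<close>
definition swap_op :: "nat \<Rightarrow> complex mat" where
  "swap_op n = mat (n*n) (n*n) (\<lambda>(p,q). if p div n = q mod n \<and> p mod n = q div n then 1 else 0)"

definition jamiolkowski :: "nat \<Rightarrow> nat \<Rightarrow> (complex mat \<Rightarrow> complex mat) \<Rightarrow> complex mat" where
  "jamiolkowski n m \<Phi> = tensor_id_left n n m \<Phi> (swap_op n)"

definition Theta :: "real \<Rightarrow> complex mat \<Rightarrow> complex mat \<Rightarrow> complex mat" where
  "Theta c \<rho> M = (1/2 :: complex) \<cdot>\<^sub>m anticommutator \<rho> M + (\<i> * complex_of_real c) \<cdot>\<^sub>m commutator \<rho> M"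

text \<open>E star rho on C^n (x) C^m (linear in rho, hence the homogeneous extension).\<close>
definition star :: "real \<Rightarrow> nat \<Rightarrow> nat \<Rightarrow> (complex mat \<Rightarrow> complex mat) \<Rightarrow> complex mat \<Rightarrow> complex mat" where
  "star c n m \<Phi> \<rho> = tensor_id_right n n m (Theta c \<rho>) (jamiolkowski n m \<Phi>)"

text \<open>Action with a spectator E on the right: E star rho_AE := ((E star .) (x) id_E)(rho_AE),
  living on A (x) B (x) E.\<close>
definition star_spec_right ::
  "real \<Rightarrow> nat \<Rightarrow> nat \<Rightarrow> nat \<Rightarrow> (complex mat \<Rightarrow> complex mat) \<Rightarrow> complex mat \<Rightarrow> complex mat" where
  "star_spec_right c nA nB nE \<Phi> R = tensor_id_right nA (nA*nB) nE (star c nA nB \<Phi>) R"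

text \<open>Action on the second factor with a spectator A on the left:
  (id_A (x) (F star .))(R) for R on A (x) B, living on A (x) B (x) C.\<close>
definition star_spec_left ::
  "real \<Rightarrow> nat \<Rightarrow> nat \<Rightarrow> nat \<Rightarrow> (complex mat \<Rightarrow> complex mat) \<Rightarrow> complex mat \<Rightarrow> complex mat" where
  "star_spec_left c nA nB nC \<Phi> R = tensor_id_left nA nB (nB*nC) (star c nB nC \<Phi>) R"

text \<open>Quantum states over spacetime on C^nA (x) C^nE: density operators or F star sigma.\<close>
definition qstate_st :: "real \<Rightarrow> nat \<Rightarrow> nat \<Rightarrow> complex mat \<Rightarrow> bool" where
  "qstate_st c nA nE R \<longleftrightarrow> density (nA*nE) R \<or>
     (\<exists>F \<sigma>. channel nA nE F \<and> density nA \<sigma> \<and> R = star c nA nE F \<sigma>)"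

text \<open>Isometry V : C^d -> C^n (an n x d matrix with V^dagger V = 1), identifying a subspace
  system A_i of C^n with C^d.\<close>
definition isometry :: "nat \<Rightarrow> nat \<Rightarrow> complex mat \<Rightarrow> bool" where
  "isometry n d V \<longleftrightarrow> V \<in> carrier_mat n d \<and> adj V * V = 1\<^sub>m d"

definition state_over_time :: "real \<Rightarrow> bool" where
  "state_over_time c \<longleftrightarrow>
    (\<forall>n m \<Phi> \<rho>. 0 < n \<longrightarrow> 0 < m \<longrightarrow> channel n m \<Phi> \<longrightarrow> density n \<rho> \<longrightarrow>
        star c n m \<Phi> \<rho> \<in> carrier_mat (n*m) (n*m) \<and>
        ptrace_fst n m (star c n m \<Phi> \<rho>) = \<Phi> \<rho> \<and>
        ptrace_snd n m (star c n m \<Phi> \<rho>) = \<rho>)"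

definition axiom_H :: "real \<Rightarrow> bool" where
  "axiom_H c \<longleftrightarrow>
    (\<forall>n m \<Phi> \<rho>. 0 < n \<longrightarrow> 0 < m \<longrightarrow> channel n m \<Phi> \<longrightarrow> density n \<rho> \<longrightarrow>
        adj (star c n m \<Phi> \<rho>) = star c n m \<Phi> \<rho>)"

definition axiom_E :: "real \<Rightarrow> bool" where
  "axiom_E c \<longleftrightarrow>
    (\<forall>nA nB nE R \<Phi>. 0 < nA \<longrightarrow> 0 < nB \<longrightarrow> 0 < nE \<longrightarrow>
        qstate_st c nA nE R \<longrightarrow> channel nA nB \<Phi> \<longrightarrow>
        (\<forall>\<I>. cptni nE \<I> \<longrightarrow>
           tensor_id_left (nA*nB) nE nE \<I> (star_spec_right c nA nB nE \<Phi> R)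
             = star_spec_right c nA nB nE \<Phi> (tensor_id_left nA nE nE \<I> R)) \<and>
        ptrace_fst nA (nB*nE) (star_spec_right c nA nB nE \<Phi> R) = tensor_id_right nA nB nE \<Phi> R)"

definition axiom_P :: "real \<Rightarrow> bool" where
  "axiom_P c \<longleftrightarrow>
    (\<forall>nA nB nC \<E> \<F> \<rho>. 0 < nA \<longrightarrow> 0 < nB \<longrightarrow> 0 < nC \<longrightarrow>
        channel nA nB \<E> \<longrightarrow> channel nB nC \<F> \<longrightarrow> density nA \<rho> \<longrightarrow>
        ptrace_mid nA nB nC (star_spec_left c nA nB nC \<F> (star c nA nB \<E> \<rho>))
          = star c nA nC (\<F> \<circ> \<E>) \<rho>)"

text \<open>(CC): an orthogonal decomposition C^n = (+)_{i<r} A_i is given by isometries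
  V i : C^(d i) -> C^n with mutually orthogonal ranges spanning C^n; 1_{A_i} = V i (V i)^dagger.
  E_{B|A_i} = E o Ad_{1_{A_i}} viewed as channel from A_i is Y |-> E (V i Y (V i)^dagger),
  and operators on A_i (x) B are embedded into A (x) B by Ad_{V i (x) 1_B}.\<close>
definition axiom_CC :: "real \<Rightarrow> bool" where
  "axiom_CC c \<longleftrightarrow>
    (\<forall>n m r d V \<Phi> (p::nat \<Rightarrow> real). 0 < n \<longrightarrow> 0 < m \<longrightarrow>
        (\<forall>i<r. 0 < d i \<and> isometry n (d i) (V i)) \<longrightarrow>
        (\<forall>i<r. \<forall>j<r. i \<noteq> j \<longrightarrow> adj (V i) * V j = 0\<^sub>m (d i) (d j)) \<longrightarrow>
        mat_sum n n {..<r} (\<lambda>i. V i * adj (V i)) = 1\<^sub>m n \<longrightarrow>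
        channel n m \<Phi> \<longrightarrow>
        (\<forall>X \<in> carrier_mat n n.
           \<Phi> (mat_sum n n {..<r} (\<lambda>i. (V i * adj (V i)) * X * (V i * adj (V i)))) = \<Phi> X) \<longrightarrow>
        (\<forall>i<r. 0 \<le> p i) \<longrightarrow> (\<Sum>i<r. p i) = 1 \<longrightarrow>
        star c n m \<Phi> (mat_sum n n {..<r}
             (\<lambda>i. complex_of_real (p i / real (d i)) \<cdot>\<^sub>m (V i * adj (V i))))
        = mat_sum (n*m) (n*m) {..<r} (\<lambda>i. complex_of_real (p i) \<cdot>\<^sub>m
             (kron (V i) (1\<^sub>m m) *
              star c (d i) m (\<lambda>Y. \<Phi> (V i * Y * adj (V i))) ((1 / of_nat (d i)) \<cdot>\<^sub>m 1\<^sub>m (d i)) *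
              adj (kron (V i) (1\<^sub>m m)))))"

definition axiom_J :: "real \<Rightarrow> bool" where
  "axiom_J c \<longleftrightarrow>
    (\<forall>n m \<Phi>. 0 < n \<longrightarrow> 0 < m \<longrightarrow> channel n m \<Phi> \<longrightarrow>
        star c n m \<Phi> ((1 / of_nat n) \<cdot>\<^sub>m 1\<^sub>m n) = (1 / of_nat n) \<cdot>\<^sub>m jamiolkowski n m \<Phi>)"

definition axiom_QC :: "real \<Rightarrow> bool" where
  "axiom_QC c \<longleftrightarrow>
    (\<forall>n \<rho>. 0 < n \<longrightarrow> density n \<rho> \<longrightarrow>
       (\<exists>\<Theta>. lin_map n n \<Theta> \<and>
          (\<forall>m \<Phi>. 0 < m \<longrightarrow> channel n m \<Phi> \<longrightarrow>
             star c n m \<Phi> \<rho> =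
               tensor_id_right n n m \<Theta> (of_nat n \<cdot>\<^sub>m star c n m \<Phi> ((1 / of_nat n) \<cdot>\<^sub>m 1\<^sub>m n))) \<and>
          (\<forall>M \<in> carrier_mat n n. \<rho> * M = M * \<rho> \<longrightarrow> \<Theta> M = \<rho> * M)))"

end

theory Submission
  imports Defs
begin

(*
  All operators on C^n (x) C^m are handled blockwise: for indices b, b' of the second factor,
  R_bb' is the operator on C^n with entries R((i,b),(i',b')).  Since Theta_rho (x) id acts on
  each block separately, (E star rho)_bb' = Theta_rho(J_bb') for the Jamiolkowski operator J of E,
  and J_bb' is the matrix representing the functional X |-> E(X)_bb' as X |-> Tr(X J_bb').

  The marginal conditions follow from Tr Theta_rho(M) = Tr(rho M) and Theta_rho(1) = rho; (H) from
  Theta_rho(M)^dagger = Theta_rho(M^dagger) for Hermitian rho and the Hermiticity of J for a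
  positive map E (polarisation); (J) and (QC) because Theta_rho is left multiplication by rho on
  operators commuting with rho; (E) and (P) because maps acting on different tensor factors
  commute.  For (CC), invariance of E under the pinching X |-> sum_i P_i X P_i forces
  J_bb' = sum_i P_i J_bb' P_i, which commutes with rho = sum_i lambda_i P_i / d_i; hence
  Theta_rho(J_bb') = rho J_bb' splits into the blocks P_i J_bb' P_i, and each of them is the
  Jamiolkowski block of the restricted channel, conjugated by the isometry onto A_i.
*)

lemma pair_index_less:
  assumes "a < n" "b < m" shows "a * m + b < n * (m::nat)"
proof -
  have "a * m + b < Suc a * m" using assms(2) by simp
  also have "\<dots> \<le> n * m" using assms(1) by (intro mult_right_mono) auto
  finally show ?thesis .
qed

lemma pair_index_bounds:
  assumes "p < n * (m::nat)" shows "p div m < n" "p mod m < m"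
  using assms by (simp_all add: less_mult_imp_div_less)
    (metis mod_less_divisor mult_0_right not_gr0 not_less_zero)

lemma sum_lessThan_mult_split:
  "(\<Sum>k<d * m. f k) = (\<Sum>s<d. \<Sum>b<m. f (s * m + b :: nat))"
proof -
  have "(\<Sum>k\<in>{s * m..<s * m + m}. f k) = (\<Sum>b<m. f (s * m + b))" for s
    using sum.shift_bounds_nat_ivl[of f 0 "s * m" m] by (simp add: atLeast0LessThan add.commute)
  then show ?thesis by (simp flip: sum.nat_group)
qed

lemma sum_sum_delta:
  fixes f :: "'a \<Rightarrow> 'b \<Rightarrow> 'c::comm_monoid_add"
  assumes "finite A" "finite B" "a \<in> A" "b \<in> B"
  shows "(\<Sum>i\<in>A. \<Sum>j\<in>B. if i = a \<and> j = b then f i j else 0) = f a b"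
    and "(\<Sum>i\<in>A. \<Sum>j\<in>B. if a = i \<and> b = j then f i j else 0) = f a b"
proof -
  have "(\<Sum>j\<in>B. if i = a \<and> j = b then f i j else 0) = (if i = a then f i b else 0)" for i
    using assms by (cases "i = a") (simp_all add: sum.delta)
  then show "(\<Sum>i\<in>A. \<Sum>j\<in>B. if i = a \<and> j = b then f i j else 0) = f a b"
    using assms by (simp add: sum.delta)
  then show "(\<Sum>i\<in>A. \<Sum>j\<in>B. if a = i \<and> b = j then f i j else 0) = f a b"
    by (simp add: eq_commute)
qed

lemma sum_swap3:
  "(\<Sum>i\<in>A. \<Sum>j\<in>B. \<Sum>k\<in>C. f i j k) = (\<Sum>j\<in>B. \<Sum>k\<in>C. \<Sum>i\<in>A. f i j k)"
proof -
  have "(\<Sum>i\<in>A. \<Sum>j\<in>B. \<Sum>k\<in>C. f i j k) = (\<Sum>j\<in>B. \<Sum>i\<in>A. \<Sum>k\<in>C. f i j k)"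
    by (rule sum.swap)
  also have "\<dots> = (\<Sum>j\<in>B. \<Sum>k\<in>C. \<Sum>i\<in>A. f i j k)"
    by (intro sum.cong refl) (rule sum.swap)
  finally show ?thesis .
qed

lemma sum_swap_pairs:
  "(\<Sum>i\<in>A. \<Sum>i'\<in>B. \<Sum>j\<in>C. \<Sum>j'\<in>D. f i i' j j') = (\<Sum>j\<in>C. \<Sum>j'\<in>D. \<Sum>i\<in>A. \<Sum>i'\<in>B. f i i' j j')"
proof -
  have "(\<Sum>i\<in>A. \<Sum>i'\<in>B. \<Sum>j\<in>C. \<Sum>j'\<in>D. f i i' j j') = (\<Sum>i\<in>A. \<Sum>j\<in>C. \<Sum>j'\<in>D. \<Sum>i'\<in>B. f i i' j j')"
    by (intro sum.cong refl) (rule sum_swap3)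
  also have "\<dots> = (\<Sum>j\<in>C. \<Sum>j'\<in>D. \<Sum>i\<in>A. \<Sum>i'\<in>B. f i i' j j')"
    by (rule sum_swap3)
  finally show ?thesis .
qed

lemma index_mult_mat_lessThan:
  assumes "A \<in> carrier_mat n k" "B \<in> carrier_mat k l" "i < n" "j < l"
  shows "(A * B) $$ (i,j) = (\<Sum>t<k. A $$ (i,t) * B $$ (t,j))"
  using assms by (auto simp: scalar_prod_def lessThan_atLeast0 intro!: sum.cong)

lemma smult_smult_mat: "a \<cdot>\<^sub>m (b \<cdot>\<^sub>m A) = (a * b) \<cdot>\<^sub>m (A :: complex mat)"
  by (intro eq_matI) auto

lemma one_smult_mat [simp]: "(1 :: complex) \<cdot>\<^sub>m A = A"
  by (intro eq_matI) auto

definition matrix_unit :: "nat \<Rightarrow> nat \<Rightarrow> nat \<Rightarrow> complex mat" where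
  "matrix_unit n a b = mat n n (\<lambda>(i,j). if i = a \<and> j = b then 1 else 0)"

lemma matrix_unit_carrier [simp]: "matrix_unit n a b \<in> carrier_mat n n"
  by (simp add: matrix_unit_def)

lemma ctrace_mult:
  assumes "A \<in> carrier_mat n k" "B \<in> carrier_mat k n"
  shows "ctrace (A * B) = (\<Sum>i<n. \<Sum>t<k. A $$ (i,t) * B $$ (t,i))"
  using assms by (simp add: ctrace_def scalar_prod_def lessThan_atLeast0)

lemma ctrace_mult_comm:
  assumes "A \<in> carrier_mat n k" "B \<in> carrier_mat k n"
  shows "ctrace (A * B) = ctrace (B * A)"
  unfolding ctrace_mult[OF assms] ctrace_mult[OF assms(2,1)]
  by (subst sum.swap) (simp add: mult.commute)

lemma ctrace_matrix_unit: "a < n \<Longrightarrow> b < n \<Longrightarrow> ctrace (matrix_unit n a b) = (if a = b then 1 else 0)"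
  by (auto simp: ctrace_def matrix_unit_def intro: sum.neutral)

lemma ctrace_matrix_unit_mult:
  assumes "M \<in> carrier_mat n n" "a < n" "b < n"
  shows "ctrace (matrix_unit n a b * M) = M $$ (b,a)"
  using assms by (simp add: ctrace_def matrix_unit_def scalar_prod_def
      if_distrib[of "\<lambda>x. x * _"] sum_sum_delta cong: if_cong)

lemma index_adj [simp]: "i < dim_col A \<Longrightarrow> j < dim_row A \<Longrightarrow> adj A $$ (i,j) = cnj (A $$ (j,i))"
  by (simp add: adj_def)

lemma adj_dim [simp]: "dim_row (adj A) = dim_col A" "dim_col (adj A) = dim_row A"
  by (simp_all add: adj_def)

lemma adj_carrier [simp]: "A \<in> carrier_mat n k \<Longrightarrow> adj A \<in> carrier_mat k n"
  by (simp add: adj_def)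

lemma mat_sum_carrier [simp]: "mat_sum n m I f \<in> carrier_mat n m"
  by (simp add: mat_sum_def)

lemma mat_sum_dim [simp]: "dim_row (mat_sum n m I f) = n" "dim_col (mat_sum n m I f) = m"
  by (simp_all add: mat_sum_def)

lemma index_mat_sum [simp]: "i < n \<Longrightarrow> j < m \<Longrightarrow> mat_sum n m I f $$ (i,j) = (\<Sum>x\<in>I. f x $$ (i,j))"
  by (simp add: mat_sum_def)

lemma mat_sum_cong: "(\<And>i. i \<in> I \<Longrightarrow> f i = g i) \<Longrightarrow> mat_sum n m I f = mat_sum n m I g"
  by (simp add: mat_sum_def)

lemma mat_sum_mult_left:
  assumes A: "A \<in> carrier_mat n n" and f: "\<forall>i\<in>I. f i \<in> carrier_mat n n"
  shows "A * mat_sum n n I f = mat_sum n n I (\<lambda>i. A * f i)"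
proof (rule eq_matI)
  fix u v assume "u < dim_row (mat_sum n n I (\<lambda>i. A * f i))" "v < dim_col (mat_sum n n I (\<lambda>i. A * f i))"
  then have uv: "u < n" "v < n" by simp_all
  have "(A * mat_sum n n I f) $$ (u,v) = (\<Sum>t<n. A $$ (u,t) * (\<Sum>i\<in>I. f i $$ (t,v)))"
    unfolding index_mult_mat_lessThan[OF A mat_sum_carrier uv] using uv by simp
  also have "\<dots> = (\<Sum>i\<in>I. (A * f i) $$ (u,v))"
    using f uv by (simp add: index_mult_mat_lessThan[OF A _ uv] sum_distrib_left sum.swap[of _ I])
  finally show "(A * mat_sum n n I f) $$ (u,v) = mat_sum n n I (\<lambda>i. A * f i) $$ (u,v)"
    using uv by simp
qed (use A in auto)

lemma mat_sum_mult_right: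
  assumes A: "A \<in> carrier_mat n n" and f: "\<forall>i\<in>I. f i \<in> carrier_mat n n"
  shows "mat_sum n n I f * A = mat_sum n n I (\<lambda>i. f i * A)"
proof (rule eq_matI)
  fix u v assume "u < dim_row (mat_sum n n I (\<lambda>i. f i * A))" "v < dim_col (mat_sum n n I (\<lambda>i. f i * A))"
  then have uv: "u < n" "v < n" by simp_all
  have "(mat_sum n n I f * A) $$ (u,v) = (\<Sum>t<n. (\<Sum>i\<in>I. f i $$ (u,t)) * A $$ (t,v))"
    unfolding index_mult_mat_lessThan[OF mat_sum_carrier A uv] using uv by simp
  also have "\<dots> = (\<Sum>i\<in>I. (f i * A) $$ (u,v))"
    using f uv by (simp add: index_mult_mat_lessThan[OF _ A uv] sum_distrib_right sum.swap[of _ I])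
  finally show "(mat_sum n n I f * A) $$ (u,v) = mat_sum n n I (\<lambda>i. f i * A) $$ (u,v)"
    using uv by simp
qed (use A in auto)

lemma ctrace_mat_sum:
  assumes "\<forall>i\<in>I. f i \<in> carrier_mat n n"
  shows "ctrace (mat_sum n n I f) = (\<Sum>i\<in>I. ctrace (f i))"
proof -
  have "ctrace (mat_sum n n I f) = (\<Sum>a<n. \<Sum>i\<in>I. f i $$ (a,a))"
    by (simp add: ctrace_def)
  also have "\<dots> = (\<Sum>i\<in>I. \<Sum>a<n. f i $$ (a,a))"
    by (rule sum.swap)
  also have "\<dots> = (\<Sum>i\<in>I. ctrace (f i))"
    using assms by (auto simp: ctrace_def intro!: sum.cong)
  finally show ?thesis .
qed

lemma lin_map_carrier: "lin_map n m \<Phi> \<Longrightarrow> X \<in> carrier_mat n n \<Longrightarrow> \<Phi> X \<in> carrier_mat m m"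
  by (simp add: lin_map_def)

lemma channel_lin_map: "channel n m \<Phi> \<Longrightarrow> lin_map n m \<Phi>"
  by (simp add: channel_def cp_map_def)

lemma cptni_lin_map: "cptni n \<I> \<Longrightarrow> lin_map n n \<I>"
  by (simp add: cptni_def cp_map_def)

lemma lin_map_zero:
  assumes "lin_map n m \<Phi>" shows "\<Phi> (0\<^sub>m n n) = 0\<^sub>m m m"
proof -
  have "\<Phi> (0\<^sub>m n n) = \<Phi> (0 \<cdot>\<^sub>m 0\<^sub>m n n)" by (simp add: eq_matI)
  also have "\<dots> = 0 \<cdot>\<^sub>m \<Phi> (0\<^sub>m n n)" using assms zero_carrier_mat unfolding lin_map_def by blast
  also have "\<dots> = 0\<^sub>m m m" using lin_map_carrier[OF assms zero_carrier_mat] by (intro eq_matI) auto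
  finally show ?thesis .
qed

lemma lin_map_mat_sum:
  assumes "lin_map n m \<Phi>" "finite I" "\<forall>i\<in>I. f i \<in> carrier_mat n n"
  shows "\<Phi> (mat_sum n n I f) = mat_sum m m I (\<lambda>i. \<Phi> (f i))"
  using assms(2,3)
proof (induction I rule: finite_induct)
  case empty
  then show ?case using lin_map_zero[OF assms(1)] by (simp add: mat_sum_def zero_mat_def)
next
  case (insert x F)
  have "mat_sum n n (insert x F) f = f x + mat_sum n n F f"
    using insert by (intro eq_matI) auto
  moreover have "mat_sum m m (insert x F) (\<lambda>i. \<Phi> (f i)) = \<Phi> (f x) + mat_sum m m F (\<lambda>i. \<Phi> (f i))"
    using insert lin_map_carrier[OF assms(1)] by (intro eq_matI) auto
  ultimately show ?case using assms(1) insert by (simp add: lin_map_def)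
qed

lemma mat_sum_matrix_units:
  assumes "X \<in> carrier_mat n n"
  shows "X = mat_sum n n {..<n} (\<lambda>a. mat_sum n n {..<n} (\<lambda>a'. X $$ (a,a') \<cdot>\<^sub>m matrix_unit n a a'))"
  using assms by (intro eq_matI)
    (auto simp: matrix_unit_def if_distrib[of "\<lambda>x. _ * x"] sum_sum_delta cong: if_cong)

lemma lin_map_expand:
  assumes "lin_map n m \<Phi>" "X \<in> carrier_mat n n" "b < m" "b' < m"
  shows "\<Phi> X $$ (b,b') = (\<Sum>a<n. \<Sum>a'<n. X $$ (a,a') * \<Phi> (matrix_unit n a a') $$ (b,b'))"
proof -
  have "\<Phi> X = mat_sum m m {..<n} (\<lambda>a. mat_sum m m {..<n} (\<lambda>a'. \<Phi> (X $$ (a,a') \<cdot>\<^sub>m matrix_unit n a a')))"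
    by (subst mat_sum_matrix_units[OF assms(2)])
      (simp add: lin_map_mat_sum[OF assms(1)] cong: mat_sum_cong)
  also have "\<dots> = mat_sum m m {..<n} (\<lambda>a. mat_sum m m {..<n} (\<lambda>a'. X $$ (a,a') \<cdot>\<^sub>m \<Phi> (matrix_unit n a a')))"
    using assms(1) by (intro mat_sum_cong) (simp add: lin_map_def)
  moreover have "dim_row (\<Phi> (matrix_unit n a a')) = m" "dim_col (\<Phi> (matrix_unit n a a')) = m" for a a'
    using lin_map_carrier[OF assms(1) matrix_unit_carrier] by auto
  ultimately show ?thesis
    using assms by simp
qed

lemma lin_map_expand_mat:
  assumes "lin_map n m \<Phi>" "b < m" "b' < m"
  shows "\<Phi> (mat n n f) $$ (b,b') = (\<Sum>a<n. \<Sum>a'<n. f (a,a') * \<Phi> (matrix_unit n a a') $$ (b,b'))"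
  using assms by (simp add: lin_map_expand)

section \<open>Blocks of operators on a tensor product\<close>

(* For R on C^n (x) C^m, block_snd n m b b' R is the operator (1 (x) <b|) R (1 (x) |b'>) on C^n
   and block_fst n m a a' R is (<a| (x) 1) R (|a'> (x) 1) on C^m. *)
definition block_snd :: "nat \<Rightarrow> nat \<Rightarrow> nat \<Rightarrow> nat \<Rightarrow> complex mat \<Rightarrow> complex mat" where
  "block_snd n m b b' R = mat n n (\<lambda>(i,i'). R $$ (i * m + b, i' * m + b'))"

definition block_fst :: "nat \<Rightarrow> nat \<Rightarrow> nat \<Rightarrow> nat \<Rightarrow> complex mat \<Rightarrow> complex mat" where
  "block_fst n m a a' R = mat m m (\<lambda>(j,j'). R $$ (a * m + j, a' * m + j'))"

lemma block_snd_carrier [simp]: "block_snd n m b b' R \<in> carrier_mat n n"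
  by (simp add: block_snd_def)

lemma block_snd_dim [simp]: "dim_row (block_snd n m b b' R) = n" "dim_col (block_snd n m b b' R) = n"
  by (simp_all add: block_snd_def)

lemma index_block_snd [simp]:
  "i < n \<Longrightarrow> i' < n \<Longrightarrow> block_snd n m b b' R $$ (i,i') = R $$ (i * m + b, i' * m + b')"
  by (simp add: block_snd_def)

lemma tensor_id_right_blockwise:
  "tensor_id_right n N k S R =
     mat (N * k) (N * k) (\<lambda>(p,q). S (block_snd n k (p mod k) (q mod k) R) $$ (p div k, q div k))"
  by (simp add: tensor_id_right_def block_snd_def)

lemma tensor_id_left_blockwise:
  "tensor_id_left k n m S R =
     mat (k * m) (k * m) (\<lambda>(p,q). S (block_fst k n (p div m) (q div m) R) $$ (p mod m, q mod m))"
  by (simp add: tensor_id_left_def block_fst_def)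

lemma tensor_id_right_cong:
  "(\<And>X. X \<in> carrier_mat n n \<Longrightarrow> S X = S' X) \<Longrightarrow> tensor_id_right n N k S R = tensor_id_right n N k S' R"
  by (simp add: tensor_id_right_def)

lemma tensor_id_left_cong:
  "(\<And>X. X \<in> carrier_mat n n \<Longrightarrow> S X = S' X) \<Longrightarrow> tensor_id_left k n m S R = tensor_id_left k n m S' R"
  by (simp add: tensor_id_left_def)

lemma mat_eq_block_sndI:
  assumes "A \<in> carrier_mat (n * m) (n * m)" "B \<in> carrier_mat (n * m) (n * m)"
    and "\<And>b b'. b < m \<Longrightarrow> b' < m \<Longrightarrow> block_snd n m b b' A = block_snd n m b b' B"
  shows "A = B"
proof (rule eq_matI)
  fix p q assume "p < dim_row B" "q < dim_col B"
  then have pq: "p < n * m" "q < n * m" using assms(2) by auto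
  note bounds = pair_index_bounds[OF pq(1)] pair_index_bounds[OF pq(2)]
  have "A $$ (p div m * m + p mod m, q div m * m + q mod m)
      = B $$ (p div m * m + p mod m, q div m * m + q mod m)"
    using arg_cong[OF assms(3)[OF bounds(2,4)], of "\<lambda>M. M $$ (p div m, q div m)"] bounds by simp
  then show "A $$ (p,q) = B $$ (p,q)" by simp
qed (use assms in auto)

lemma block_snd_tensor_id_right:
  assumes "S (block_snd n k b b' R) \<in> carrier_mat N N" "b < k" "b' < k"
  shows "block_snd N k b b' (tensor_id_right n N k S R) = S (block_snd n k b b' R)"
  using assms by (intro eq_matI) (auto simp: tensor_id_right_blockwise pair_index_less)

lemma ptrace_fst_dim [simp]: "dim_row (ptrace_fst n m R) = m" "dim_col (ptrace_fst n m R) = m"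
  by (simp_all add: ptrace_fst_def)

lemma index_ptrace_fst:
  "b < m \<Longrightarrow> b' < m \<Longrightarrow> ptrace_fst n m R $$ (b,b') = ctrace (block_snd n m b b' R)"
  by (simp add: ptrace_fst_def ctrace_def)

lemma ptrace_snd_blockwise: "ptrace_snd n m R = mat_sum n n {..<m} (\<lambda>b. block_snd n m b b R)"
  by (intro eq_matI) (auto simp: ptrace_snd_def)

lemma block_snd_adj:
  assumes "R \<in> carrier_mat (n * m) (n * m)" "b < m" "b' < m"
  shows "block_snd n m b b' (adj R) = adj (block_snd n m b' b R)"
  using assms by (intro eq_matI) (auto simp: pair_index_less)

lemma block_snd_add:
  "A \<in> carrier_mat (n * m) (n * m) \<Longrightarrow> B \<in> carrier_mat (n * m) (n * m) \<Longrightarrow> b < m \<Longrightarrow> b' < m \<Longrightarrow>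
    block_snd n m b b' (A + B) = block_snd n m b b' A + block_snd n m b b' B"
  by (intro eq_matI) (auto simp: pair_index_less)

lemma block_snd_smult:
  "R \<in> carrier_mat (n * m) (n * m) \<Longrightarrow> b < m \<Longrightarrow> b' < m \<Longrightarrow>
    block_snd n m b b' (a \<cdot>\<^sub>m R) = a \<cdot>\<^sub>m block_snd n m b b' R"
  by (intro eq_matI) (auto simp: pair_index_less)

lemma block_snd_mat_sum:
  "b < m \<Longrightarrow> b' < m \<Longrightarrow>
    block_snd n m b b' (mat_sum (n * m) (n * m) I f) = mat_sum n n I (\<lambda>i. block_snd n m b b' (f i))"
  by (intro eq_matI) (auto simp: pair_index_less)

lemma kron_id_carrier: "V \<in> carrier_mat n d \<Longrightarrow> kron V (1\<^sub>m m) \<in> carrier_mat (n * m) (d * m)"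
  by (simp add: kron_def)

lemma sum_kron_id_row:
  assumes "V \<in> carrier_mat n d" "i < n" "b < m"
  shows "(\<Sum>k<d * m. kron V (1\<^sub>m m) $$ (i * m + b, k) * f k) = (\<Sum>s<d. V $$ (i,s) * f (s * m + b))"
proof -
  have "kron V (1\<^sub>m m) $$ (i * m + b, s * m + c) = (if c = b then V $$ (i,s) else 0)"
    if "s < d" "c < m" for s c
    using assms that by (simp add: kron_def pair_index_less)
  then show ?thesis
    using assms(3) by (simp add: sum_lessThan_mult_split if_distrib[of "\<lambda>x. x * _"] cong: if_cong)
qed

lemma block_snd_kron_id_conj:
  assumes V: "V \<in> carrier_mat n d" and R: "R \<in> carrier_mat (d * m) (d * m)" and "b < m" "b' < m"
  shows "block_snd n m b b' (kron V (1\<^sub>m m) * R * adj (kron V (1\<^sub>m m))) = V * block_snd d m b b' R * adj V"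
proof (rule eq_matI)
  let ?W = "kron V (1\<^sub>m m)"
  have W: "?W \<in> carrier_mat (n * m) (d * m)" using V by (rule kron_id_carrier)
  fix i i' assume "i < dim_row (V * block_snd d m b b' R * adj V)"
    "i' < dim_col (V * block_snd d m b b' R * adj V)"
  then have ii: "i < n" "i' < n" using V by auto
  have P: "i * m + b < n * m" "i' * m + b' < n * m" using ii assms by (simp_all add: pair_index_less)
  have WR: "(?W * R) $$ (i * m + b, l) = (\<Sum>s<d. V $$ (i,s) * R $$ (s * m + b, l))" if "l < d * m" for l
    unfolding index_mult_mat_lessThan[OF W R P(1) that] by (rule sum_kron_id_row[OF V ii(1) assms(3)])
  have "(?W * R * adj ?W) $$ (i * m + b, i' * m + b')
      = (\<Sum>l<d * m. (?W * R) $$ (i * m + b, l) * adj ?W $$ (l, i' * m + b'))"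
    using W R P by (intro index_mult_mat_lessThan) auto
  also have "\<dots> = (\<Sum>l<d * m. (?W * R) $$ (i * m + b, l) * cnj (?W $$ (i' * m + b', l)))"
    using W P by (intro sum.cong refl) simp
  also have "\<dots> = cnj (\<Sum>l<d * m. ?W $$ (i' * m + b', l) * cnj ((?W * R) $$ (i * m + b, l)))"
    by (simp add: mult.commute)
  also have "\<dots> = (\<Sum>t<d. (\<Sum>s<d. V $$ (i,s) * R $$ (s * m + b, t * m + b')) * cnj (V $$ (i',t)))"
    using ii assms by (simp add: sum_kron_id_row[OF V] WR pair_index_less mult.commute)
  also have "\<dots> = (\<Sum>t<d. (V * block_snd d m b b' R) $$ (i,t) * adj V $$ (t,i'))"
    using V ii by (intro sum.cong refl)
      (simp add: index_mult_mat_lessThan[OF V block_snd_carrier] del: index_mult_mat)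
  also have "\<dots> = (V * block_snd d m b b' R * adj V) $$ (i,i')"
    using V ii by (intro index_mult_mat_lessThan[symmetric]) auto
  finally show "block_snd n m b b' (?W * R * adj ?W) $$ (i,i')
      = (V * block_snd d m b b' R * adj V) $$ (i,i')"
    using ii by simp
qed (use V in auto)

section \<open>Maps acting on different tensor factors\<close>

lemma tensor_id_left_comp:
  assumes "\<And>X. X \<in> carrier_mat n n \<Longrightarrow> E X \<in> carrier_mat m m"
  shows "tensor_id_left k m l F (tensor_id_left k n m E R) = tensor_id_left k n l (F \<circ> E) R"
proof -
  have "block_fst k m a a' (tensor_id_left k n m E R) = E (block_fst k n a a' R)"
    if "a < k" "a' < k" for a a'
    using assms[of "block_fst k n a a' R"] that
    by (intro eq_matI) (auto simp: tensor_id_left_blockwise pair_index_less block_fst_def)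
  then show ?thesis
    by (intro eq_matI) (auto simp: tensor_id_left_blockwise pair_index_bounds)
qed

lemma tensor_id_left_tensor_id_right_commute:
  assumes S: "lin_map n N S" and I: "lin_map k K I"
  shows "tensor_id_left N k K I (tensor_id_right n N k S R)
       = tensor_id_right n N K S (tensor_id_left n k K I R)"
proof (rule eq_matI)
  fix P Q assume "P < dim_row (tensor_id_right n N K S (tensor_id_left n k K I R))"
    "Q < dim_col (tensor_id_right n N K S (tensor_id_left n k K I R))"
  then have PQ: "P < N * K" "Q < N * K" by (simp_all add: tensor_id_right_def)
  define a a' b b' where "a = P div K" "a' = Q div K" "b = P mod K" "b' = Q mod K"
  have bounds: "a < N" "a' < N" "b < K" "b' < K"
    using PQ by (simp_all add: a_a'_b_b'_def pair_index_bounds)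
  define F where "F j j' i i' = R $$ (j * k + i, j' * k + i') * S (matrix_unit n j j') $$ (a,a')
      * I (matrix_unit k i i') $$ (b,b')" for j j' i i'
  have "tensor_id_left N k K I (tensor_id_right n N k S R) $$ (P,Q)
      = I (mat k k (\<lambda>(i,i'). S (block_snd n k i i' R) $$ (a,a'))) $$ (b,b')"
    using PQ bounds unfolding tensor_id_left_def tensor_id_right_blockwise a_a'_b_b'_def
    by (auto simp: pair_index_less intro!: arg_cong[where f = "\<lambda>X. I X $$ _"] cong_mat)
  also have "\<dots> = (\<Sum>i<k. \<Sum>i'<k. \<Sum>j<n. \<Sum>j'<n. F j j' i i')"
    using bounds by (simp add: lin_map_expand_mat[OF I] lin_map_expand_mat[OF S] block_snd_def F_def
        sum_distrib_right)
  also have "\<dots> = (\<Sum>j<n. \<Sum>j'<n. \<Sum>i<k. \<Sum>i'<k. F j j' i i')"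
    by (rule sum_swap_pairs)
  also have "\<dots> = S (mat n n (\<lambda>(j,j'). I (block_fst n k j j' R) $$ (b,b'))) $$ (a,a')"
    using bounds by (simp add: lin_map_expand_mat[OF I] lin_map_expand_mat[OF S] block_fst_def F_def
        sum_distrib_left sum_distrib_right mult_ac)
  also have "\<dots> = tensor_id_right n N K S (tensor_id_left n k K I R) $$ (P,Q)"
    using PQ bounds unfolding tensor_id_right_def tensor_id_left_blockwise a_a'_b_b'_def
    by (auto simp: pair_index_less intro!: arg_cong[where f = "\<lambda>X. S X $$ _"] cong_mat)
  finally show "tensor_id_left N k K I (tensor_id_right n N k S R) $$ (P,Q)
      = tensor_id_right n N K S (tensor_id_left n k K I R) $$ (P,Q)" .
qed (simp_all add: tensor_id_left_def tensor_id_right_def)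

lemma ptrace_fst_tensor_id_right:
  "ptrace_fst n (m * k) (tensor_id_right N (n * m) k S R)
     = tensor_id_right N m k (\<lambda>X. ptrace_fst n m (S X)) R"
proof (rule eq_matI)
  fix p q assume "p < dim_row (tensor_id_right N m k (\<lambda>X. ptrace_fst n m (S X)) R)"
    "q < dim_col (tensor_id_right N m k (\<lambda>X. ptrace_fst n m (S X)) R)"
  then have pq: "p < m * k" "q < m * k" by (simp_all add: tensor_id_right_def)
  note bounds = pair_index_bounds[OF pq(1)] pair_index_bounds[OF pq(2)]
  have shift: "i * (m * k) + p = (i * m + p div k) * k + p mod k" for i p
    by (simp add: algebra_simps)
  have "i * (m * k) + p < n * m * k" "i * (m * k) + q < n * m * k" if "i < n" for i
    using pair_index_less[OF that pq(1)] pair_index_less[OF that pq(2)] by (simp_all add: mult.assoc)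
  then show "ptrace_fst n (m * k) (tensor_id_right N (n * m) k S R) $$ (p,q)
      = tensor_id_right N m k (\<lambda>X. ptrace_fst n m (S X)) R $$ (p,q)"
    using pq bounds
    by (simp add: ptrace_fst_def tensor_id_right_blockwise shift pair_index_less del: div_mult_mod_eq)
qed (simp_all add: ptrace_fst_def tensor_id_right_def)

lemma ptrace_mid_tensor_id_left:
  "ptrace_mid nA nB nC (tensor_id_left nA nB (nB * nC) S R)
     = tensor_id_left nA nB nC (\<lambda>X. ptrace_fst nB nC (S X)) R"
proof (rule eq_matI)
  fix p q assume "p < dim_row (tensor_id_left nA nB nC (\<lambda>X. ptrace_fst nB nC (S X)) R)"
    "q < dim_col (tensor_id_left nA nB nC (\<lambda>X. ptrace_fst nB nC (S X)) R)"
  then have pq: "p < nA * nC" "q < nA * nC" by (simp_all add: tensor_id_left_def)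
  note bounds = pair_index_bounds[OF pq(1)] pair_index_bounds[OF pq(2)]
  have "j * nC + p mod nC < nB * nC" "j * nC + q mod nC < nB * nC" if "j < nB" for j
    using bounds that by (simp_all add: pair_index_less)
  moreover have "p div nC * (nB * nC) + (j * nC + p mod nC) < nA * (nB * nC)"
    "q div nC * (nB * nC) + (j * nC + q mod nC) < nA * (nB * nC)" if "j < nB" for j
    using bounds that by (simp_all add: pair_index_less)
  ultimately show "ptrace_mid nA nB nC (tensor_id_left nA nB (nB * nC) S R) $$ (p,q)
      = tensor_id_left nA nB nC (\<lambda>X. ptrace_fst nB nC (S X)) R $$ (p,q)"
    using pq bounds by (simp add: ptrace_mid_def tensor_id_left_blockwise ptrace_fst_def add.assoc)
qed (simp_all add: ptrace_mid_def tensor_id_left_def)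

lemma ptrace_snd_tensor_id_right:
  assumes "lin_map n N S"
  shows "ptrace_snd N m (tensor_id_right n N m S R) = S (ptrace_snd n m R)"
proof -
  have "ptrace_snd N m (tensor_id_right n N m S R) = mat_sum N N {..<m} (\<lambda>b. S (block_snd n m b b R))"
    unfolding ptrace_snd_blockwise
    using lin_map_carrier[OF assms] by (intro mat_sum_cong) (simp add: block_snd_tensor_id_right)
  also have "\<dots> = S (ptrace_snd n m R)"
    unfolding ptrace_snd_blockwise by (simp add: lin_map_mat_sum[OF assms])
  finally show ?thesis .
qed

section \<open>The Jamiolkowski operator\<close>

lemma jamiolkowski_carrier [simp]: "jamiolkowski n m \<Phi> \<in> carrier_mat (n * m) (n * m)"
  by (simp add: jamiolkowski_def tensor_id_left_def)

lemma block_snd_jamiolkowski: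
  assumes "b < m" "b' < m"
  shows "block_snd n m b b' (jamiolkowski n m \<Phi>) = mat n n (\<lambda>(a,a'). \<Phi> (matrix_unit n a' a) $$ (b,b'))"
proof -
  have "block_fst n n a a' (swap_op n) = matrix_unit n a' a" if "a < n" "a' < n" for a a'
    using that by (intro eq_matI) (auto simp: block_fst_def swap_op_def matrix_unit_def pair_index_less)
  then show ?thesis
    using assms by (intro eq_matI) (auto simp: jamiolkowski_def tensor_id_left_blockwise pair_index_less)
qed

lemma lin_map_index_ctrace_jamiolkowski:
  assumes "lin_map n m \<Phi>" "X \<in> carrier_mat n n" "b < m" "b' < m"
  shows "\<Phi> X $$ (b,b') = ctrace (X * block_snd n m b b' (jamiolkowski n m \<Phi>))"
proof -
  have "ctrace (X * block_snd n m b b' (jamiolkowski n m \<Phi>))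
      = (\<Sum>a<n. \<Sum>a'<n. X $$ (a,a') * block_snd n m b b' (jamiolkowski n m \<Phi>) $$ (a',a))"
    by (rule ctrace_mult[OF assms(2) block_snd_carrier])
  also have "\<dots> = \<Phi> X $$ (b,b')"
    using assms by (simp add: block_snd_jamiolkowski lin_map_expand)
  finally show ?thesis ..
qed

lemma block_snd_jamiolkowski_unique:
  assumes "K \<in> carrier_mat n n" "b < m" "b' < m"
    and "\<And>X. X \<in> carrier_mat n n \<Longrightarrow> \<Phi> X $$ (b,b') = ctrace (X * K)"
  shows "block_snd n m b b' (jamiolkowski n m \<Phi>) = K"
  using assms by (intro eq_matI) (auto simp: block_snd_jamiolkowski ctrace_matrix_unit_mult)

lemma ptrace_snd_jamiolkowski:
  assumes "channel n m \<Phi>"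
  shows "ptrace_snd n m (jamiolkowski n m \<Phi>) = 1\<^sub>m n"
proof (rule eq_matI)
  fix a a' assume "a < dim_row (1\<^sub>m n)" "a' < dim_col (1\<^sub>m n)"
  then have aa: "a < n" "a' < n" by simp_all
  have "ptrace_snd n m (jamiolkowski n m \<Phi>) $$ (a,a') = ctrace (\<Phi> (matrix_unit n a' a))"
    using aa carrier_matD[OF lin_map_carrier[OF channel_lin_map[OF assms] matrix_unit_carrier]]
    by (simp add: ptrace_snd_blockwise block_snd_jamiolkowski ctrace_def)
  also have "\<dots> = 1\<^sub>m n $$ (a,a')"
    using assms aa by (simp add: channel_def ctrace_matrix_unit)
  finally show "ptrace_snd n m (jamiolkowski n m \<Phi>) $$ (a,a') = 1\<^sub>m n $$ (a,a')" .
qed (simp_all add: ptrace_snd_def)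

lemma jamiolkowski_comp:
  "lin_map nA nB \<E> \<Longrightarrow> tensor_id_left nA nB nC \<F> (jamiolkowski nA nB \<E>) = jamiolkowski nA nC (\<F> \<circ> \<E>)"
  unfolding jamiolkowski_def by (rule tensor_id_left_comp) (rule lin_map_carrier)

lemma block_snd_jamiolkowski_compress:
  assumes lin: "lin_map n m \<Phi>" and V: "V \<in> carrier_mat n d" and bb: "b < m" "b' < m"
  shows "block_snd d m b b' (jamiolkowski d m (\<lambda>Y. \<Phi> (V * Y * adj V)))
       = adj V * block_snd n m b b' (jamiolkowski n m \<Phi>) * V"
proof (rule block_snd_jamiolkowski_unique[OF _ bb])
  let ?K = "block_snd n m b b' (jamiolkowski n m \<Phi>)"
  have aV: "adj V \<in> carrier_mat d n" using V by simp
  show "adj V * ?K * V \<in> carrier_mat d d"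
    using mult_carrier_mat[OF mult_carrier_mat[OF aV block_snd_carrier] V] .
  fix Y :: "complex mat" assume Y: "Y \<in> carrier_mat d d"
  have VYV: "V * Y * adj V \<in> carrier_mat n n" by (meson mult_carrier_mat aV V Y)
  have K: "?K \<in> carrier_mat n n" by simp
  have YV: "Y * adj V \<in> carrier_mat d n" using Y aV by (rule mult_carrier_mat)
  have "\<Phi> (V * Y * adj V) $$ (b,b') = ctrace (V * (Y * adj V * ?K))"
    unfolding lin_map_index_ctrace_jamiolkowski[OF lin VYV bb]
    by (simp only: assoc_mult_mat[OF V Y aV] assoc_mult_mat[OF V YV K])
  also have "\<dots> = ctrace (Y * adj V * ?K * V)"
    using V mult_carrier_mat[OF YV K] by (rule ctrace_mult_comm)
  also have "\<dots> = ctrace (Y * (adj V * ?K * V))"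
    by (simp only: assoc_mult_mat[OF Y aV K] assoc_mult_mat[OF Y mult_carrier_mat[OF aV K] V])
  finally show "\<Phi> (V * Y * adj V) $$ (b,b') = ctrace (Y * (adj V * ?K * V))" .
qed

lemma block_snd_jamiolkowski_pinching:
  assumes lin: "lin_map n m \<Phi>" and "finite I" and P: "\<forall>i\<in>I. P i \<in> carrier_mat n n"
    and inv: "\<forall>X\<in>carrier_mat n n. \<Phi> (mat_sum n n I (\<lambda>i. P i * X * P i)) = \<Phi> X"
    and bb: "b < m" "b' < m"
  shows "block_snd n m b b' (jamiolkowski n m \<Phi>)
       = mat_sum n n I (\<lambda>i. P i * block_snd n m b b' (jamiolkowski n m \<Phi>) * P i)"
proof (rule block_snd_jamiolkowski_unique[OF mat_sum_carrier bb])
  let ?K = "block_snd n m b b' (jamiolkowski n m \<Phi>)"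
  fix X :: "complex mat" assume X: "X \<in> carrier_mat n n"
  have K: "?K \<in> carrier_mat n n" by simp
  have PXP: "\<forall>i\<in>I. P i * X * P i \<in> carrier_mat n n" and PKP: "\<forall>i\<in>I. P i * ?K * P i \<in> carrier_mat n n"
    using P X K by (blast intro: mult_carrier_mat)+
  then have PXPK: "\<forall>i\<in>I. P i * X * P i * ?K \<in> carrier_mat n n"
    and XPKP: "\<forall>i\<in>I. X * (P i * ?K * P i) \<in> carrier_mat n n"
    using X K by (blast intro: mult_carrier_mat)+
  have "\<Phi> X $$ (b,b') = \<Phi> (mat_sum n n I (\<lambda>i. P i * X * P i)) $$ (b,b')"
    using inv X by simp
  also have "\<dots> = ctrace (mat_sum n n I (\<lambda>i. P i * X * P i) * ?K)"
    by (rule lin_map_index_ctrace_jamiolkowski[OF lin mat_sum_carrier bb])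
  also have "\<dots> = (\<Sum>i\<in>I. ctrace (P i * X * P i * ?K))"
    unfolding mat_sum_mult_right[OF K PXP] by (rule ctrace_mat_sum[OF PXPK])
  also have "\<dots> = (\<Sum>i\<in>I. ctrace (X * (P i * ?K * P i)))"
  proof (intro sum.cong refl)
    fix i assume "i \<in> I"
    then have Pi: "P i \<in> carrier_mat n n" using P by simp
    have XP: "X * P i \<in> carrier_mat n n" using X Pi by (rule mult_carrier_mat)
    have "ctrace (P i * X * P i * ?K) = ctrace (P i * (X * P i * ?K))"
      by (simp only: assoc_mult_mat[OF Pi X Pi] assoc_mult_mat[OF Pi XP K])
    also have "\<dots> = ctrace (X * P i * ?K * P i)"
      using Pi mult_carrier_mat[OF XP K] by (rule ctrace_mult_comm)
    also have "\<dots> = ctrace (X * (P i * ?K * P i))"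
      by (simp only: assoc_mult_mat[OF X Pi K] assoc_mult_mat[OF X mult_carrier_mat[OF Pi K] Pi])
    finally show "ctrace (P i * X * P i * ?K) = ctrace (X * (P i * ?K * P i))" .
  qed
  also have "\<dots> = ctrace (X * mat_sum n n I (\<lambda>i. P i * ?K * P i))"
    unfolding mat_sum_mult_left[OF X PKP] by (rule ctrace_mat_sum[OF XPKP, symmetric])
  finally show "\<Phi> X $$ (b,b') = ctrace (X * mat_sum n n I (\<lambda>i. P i * ?K * P i))" .
qed

section \<open>Positive maps preserve Hermiticity\<close>

lemma polarization_cnj:
  fixes A B C D A' B' C' D' :: complex
  assumes h: "\<And>y. A' + y * B' + cnj y * C' + cnj y * y * D' = cnj (A + y * B + cnj y * C + cnj y * y * D)"
  shows "C' = cnj B"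
proof -
  have p1: "A' + B' + C' + D' = cnj A + cnj B + cnj C + cnj D" using h[of 1] by simp
  have m1: "A' - B' - C' + D' = cnj A - cnj B - cnj C + cnj D" using h[of "-1"] by simp
  have pi: "A' + \<i> * B' - \<i> * C' + D' = cnj A - \<i> * cnj B + \<i> * cnj C + cnj D" using h[of \<i>] by simp
  have mi: "A' - \<i> * B' + \<i> * C' + D' = cnj A + \<i> * cnj B - \<i> * cnj C + cnj D" using h[of "-\<i>"] by simp
  show ?thesis using p1 m1 pi mi by (simp add: complex_eq_iff)
qed

lemma quadratic_form_pair:
  fixes Z :: "nat \<Rightarrow> nat \<Rightarrow> complex"
  assumes "i < n" "j < n" and v: "\<And>k. v k = (if k = i then 1 else 0) + (if k = j then y else 0)"
  shows "(\<Sum>k<n. \<Sum>l<n. cnj (v k) * Z k l * v l) = Z i i + y * Z i j + cnj y * Z j i + cnj y * y * Z j j"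
proof -
  have row: "(\<Sum>l<n. v l * w l) = w i + y * w j" for w :: "nat \<Rightarrow> complex"
    using assms by (simp add: distrib_right sum.distrib if_distrib[of "\<lambda>x. x * _"] cong: if_cong)
  have "(\<Sum>k<n. \<Sum>l<n. cnj (v k) * Z k l * v l) = (\<Sum>k<n. cnj (v k) * (\<Sum>l<n. v l * Z k l))"
    by (simp add: sum_distrib_left mult_ac)
  also have "\<dots> = (\<Sum>k<n. cnj (v k) * (Z k i + y * Z k j))"
    by (simp only: row)
  also have "\<dots> = cnj (\<Sum>k<n. v k * cnj (Z k i + y * Z k j))"
    by (simp add: mult.commute)
  also have "\<dots> = Z i i + y * Z i j + cnj y * (Z j i + y * Z j j)"
    by (simp add: row)
  finally show ?thesis by (simp add: algebra_simps)
qed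

lemma psd_adj:
  assumes "psd n X"
  shows "adj X = X"
proof -
  have X: "X \<in> carrier_mat n n" using assms by (simp add: psd_def)
  show ?thesis
  proof (rule eq_matI)
    fix j i assume "j < dim_row X" "i < dim_col X"
    then have ij: "i < n" "j < n" using X by auto
    define Q where "Q y = X $$ (i,i) + y * X $$ (i,j) + cnj y * X $$ (j,i) + cnj y * y * X $$ (j,j)" for y
    have "Im (Q y) = 0" for y
    proof -
      define v where "v k = (if k = i then 1 else 0) + (if k = j then y else 0)" for k
      have "Im (\<Sum>k<n. \<Sum>l<n. cnj (v k) * X $$ (k,l) * v l) = 0"
        using assms unfolding psd_def by blast
      then show ?thesis
        unfolding quadratic_form_pair[OF ij, where Z = "\<lambda>k l. X $$ (k,l)", OF v_def] Q_def .
    qed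
    then have Q_real: "Q y = cnj (Q y)" for y by (simp add: complex_eq_iff)
    have "X $$ (j,i) = cnj (X $$ (i,j))"
      by (rule polarization_cnj[OF Q_real[unfolded Q_def]])
    then show "adj X $$ (j,i) = X $$ (j,i)" using X ij by simp
  qed (use X in auto)
qed

lemma density_carrier: "density n \<rho> \<Longrightarrow> \<rho> \<in> carrier_mat n n"
  by (simp add: density_def psd_def)

lemma psd_outer:
  "psd n (mat n n (\<lambda>(u,u'). cnj (v u) * v u'))"
  unfolding psd_def
proof (intro conjI allI)
  fix w :: "nat \<Rightarrow> complex"
  have "(\<Sum>k<n. \<Sum>l<n. cnj (w k) * mat n n (\<lambda>(u,u'). cnj (v u) * v u') $$ (k,l) * w l)
      = cnj (\<Sum>k<n. v k * w k) * (\<Sum>l<n. v l * w l)"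
    by (simp add: sum_distrib_left sum_distrib_right mult_ac)
  moreover have "Im (cnj z * z) = 0" "0 \<le> Re (cnj z * z)" for z :: complex
    by (simp_all add: algebra_simps)
  ultimately show "Im (\<Sum>k<n. \<Sum>l<n. cnj (w k) * mat n n (\<lambda>(u,u'). cnj (v u) * v u') $$ (k,l) * w l) = 0"
    and "0 \<le> Re (\<Sum>k<n. \<Sum>l<n. cnj (w k) * mat n n (\<lambda>(u,u'). cnj (v u) * v u') $$ (k,l) * w l)"
    by metis+
qed simp

lemma cp_map_psd:
  assumes "cp_map n m \<Phi>" "psd n X"
  shows "psd m (\<Phi> X)"
proof -
  have X: "X \<in> carrier_mat n n" using assms(2) by (simp add: psd_def)
  then have \<Phi>X: "\<Phi> X \<in> carrier_mat m m" using assms(1) by (simp add: cp_map_def lin_map_def)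
  have "psd (m * 1) (tensor_id_right n m 1 \<Phi> X)"
    using assms unfolding cp_map_def by (metis mult_1_right)
  moreover have "tensor_id_right n m 1 \<Phi> X = \<Phi> X"
  proof -
    have "mat n n (\<lambda>(i,i'). X $$ (i * 1 + p mod 1, i' * 1 + q mod 1)) = X" for p q
      using X by (intro eq_matI) auto
    then show ?thesis using \<Phi>X by (intro eq_matI) (auto simp: tensor_id_right_def)
  qed
  ultimately show ?thesis by simp
qed

lemma positive_map_adj_matrix_unit:
  assumes lin: "lin_map n m \<Phi>" and pos: "\<And>X. psd n X \<Longrightarrow> psd m (\<Phi> X)" and jk: "j < n" "k < n"
  shows "adj (\<Phi> (matrix_unit n j k)) = \<Phi> (matrix_unit n k j)"
proof -
  let ?G = "\<lambda>u u'. \<Phi> (matrix_unit n u u')"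
  have G: "?G u u' \<in> carrier_mat m m" for u u' by (rule lin_map_carrier[OF lin matrix_unit_carrier])
  then have G_dim: "dim_row (?G u u') = m" "dim_col (?G u u') = m" for u u' by auto
  show ?thesis
  proof (rule eq_matI)
    fix b b' assume "b < dim_row (?G k j)" "b' < dim_col (?G k j)"
    then have bb: "b < m" "b' < m" by (simp_all only: G_dim)
    define v where "v y u = (if u = j then 1 else 0) + (if u = k then y else 0)" for y :: complex and u
    define P where "P y = \<Phi> (mat n n (\<lambda>(u,u'). cnj (v y u) * v y u'))" for y
    have P: "P y $$ (x,x') = ?G j j $$ (x,x') + y * ?G j k $$ (x,x') + cnj y * ?G k j $$ (x,x')
        + cnj y * y * ?G k k $$ (x,x')" if "x < m" "x' < m" for x x' y
    proof -
      have "P y $$ (x,x') = (\<Sum>u<n. \<Sum>u'<n. cnj (v y u) * v y u' * ?G u u' $$ (x,x'))"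
        unfolding P_def lin_map_expand[OF lin mat_carrier that] by (intro sum.cong refl) simp
      also have "\<dots> = (\<Sum>u<n. \<Sum>u'<n. cnj (v y u) * ?G u u' $$ (x,x') * v y u')"
        by (intro sum.cong refl) (simp only: mult_ac)
      finally show ?thesis
        by (simp only: quadratic_form_pair[OF jk v_def[of y]])
    qed
    have P_herm: "P y $$ (b,b') = cnj (P y $$ (b',b))" for y
    proof -
      have "P y \<in> carrier_mat m m" unfolding P_def by (rule lin_map_carrier[OF lin mat_carrier])
      then have "adj (P y) $$ (b,b') = cnj (P y $$ (b',b))" using bb by simp
      moreover have "adj (P y) = P y"
        unfolding P_def by (rule psd_adj[OF pos[OF psd_outer]])
      ultimately show ?thesis by simp
    qed
    have "?G k j $$ (b,b') = cnj (?G j k $$ (b',b))"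
      by (rule polarization_cnj[OF P_herm[unfolded P[OF bb] P[OF bb(2,1)]]])
    then show "adj (?G j k) $$ (b,b') = ?G k j $$ (b,b')" using bb by (simp add: G_dim)
  qed (simp_all add: G_dim)
qed

lemma adj_jamiolkowski:
  assumes "channel n m \<Phi>"
  shows "adj (jamiolkowski n m \<Phi>) = jamiolkowski n m \<Phi>"
proof (rule mat_eq_block_sndI[where n = n and m = m])
  have lin: "lin_map n m \<Phi>" by (rule channel_lin_map[OF assms])
  have pos: "psd n X \<Longrightarrow> psd m (\<Phi> X)" for X using assms cp_map_psd unfolding channel_def by blast
  fix b b' assume bb: "b < m" "b' < m"
  show "block_snd n m b b' (adj (jamiolkowski n m \<Phi>)) = block_snd n m b b' (jamiolkowski n m \<Phi>)"
  proof (rule eq_matI)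
    fix a a' assume "a < dim_row (block_snd n m b b' (jamiolkowski n m \<Phi>))"
      "a' < dim_col (block_snd n m b b' (jamiolkowski n m \<Phi>))"
    then have aa: "a < n" "a' < n" by simp_all
    have "adj (\<Phi> (matrix_unit n a a')) $$ (b,b') = \<Phi> (matrix_unit n a' a) $$ (b,b')"
      by (simp only: positive_map_adj_matrix_unit[OF lin pos aa])
    then show "block_snd n m b b' (adj (jamiolkowski n m \<Phi>)) $$ (a,a')
        = block_snd n m b b' (jamiolkowski n m \<Phi>) $$ (a,a')"
      using aa bb carrier_matD[OF lin_map_carrier[OF lin matrix_unit_carrier]]
      by (simp add: block_snd_adj block_snd_jamiolkowski)
  qed simp_all
qed (use adj_carrier[OF jamiolkowski_carrier] in auto)

section \<open>The map Theta\<close>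

lemma Theta_dim [simp]: "dim_row (Theta c \<rho> M) = dim_row M" "dim_col (Theta c \<rho> M) = dim_col \<rho>"
  unfolding Theta_def anticommutator_def commutator_def by simp_all

lemma Theta_carrier [simp]: "\<rho> \<in> carrier_mat n n \<Longrightarrow> M \<in> carrier_mat n n \<Longrightarrow> Theta c \<rho> M \<in> carrier_mat n n"
  by (intro carrier_matI) auto

lemma index_Theta:
  assumes "\<rho> \<in> carrier_mat n n" "M \<in> carrier_mat n n" "i < n" "k < n"
  shows "Theta c \<rho> M $$ (i,k) = (1/2 + \<i> * c) * (\<Sum>t<n. \<rho> $$ (i,t) * M $$ (t,k))
                                 + (1/2 - \<i> * c) * (\<Sum>t<n. M $$ (i,t) * \<rho> $$ (t,k))"
  unfolding Theta_def anticommutator_def commutator_def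
  using assms by (simp add: index_mult_mat_lessThan[of _ n n _ n] algebra_simps del: index_mult_mat(1))

lemma Theta_commute:
  assumes "\<rho> \<in> carrier_mat n n" "M \<in> carrier_mat n n" "\<rho> * M = M * \<rho>"
  shows "Theta c \<rho> M = \<rho> * M"
  unfolding Theta_def anticommutator_def commutator_def assms(3)[symmetric]
  using assms by (intro eq_matI) auto

lemma Theta_scalar:
  assumes "M \<in> carrier_mat n n"
  shows "Theta c (a \<cdot>\<^sub>m 1\<^sub>m n) M = a \<cdot>\<^sub>m M"
proof -
  have "(a \<cdot>\<^sub>m 1\<^sub>m n) * M = a \<cdot>\<^sub>m M" "M * (a \<cdot>\<^sub>m 1\<^sub>m n) = a \<cdot>\<^sub>m M"
    using mult_smult_assoc_mat[OF one_carrier_mat assms, of a]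
      mult_smult_distrib[OF assms one_carrier_mat, of a] assms
    by simp_all
  then show ?thesis using assms Theta_commute[of "a \<cdot>\<^sub>m 1\<^sub>m n" n M] by simp
qed

lemma ctrace_Theta:
  assumes "\<rho> \<in> carrier_mat n n" "M \<in> carrier_mat n n"
  shows "ctrace (Theta c \<rho> M) = ctrace (\<rho> * M)"
proof -
  have "ctrace (Theta c \<rho> M) = (\<Sum>i<n. Theta c \<rho> M $$ (i,i))"
    using assms by (simp add: ctrace_def)
  also have "\<dots> = (1/2 + \<i> * c) * (\<Sum>i<n. \<Sum>t<n. \<rho> $$ (i,t) * M $$ (t,i))
                   + (1/2 - \<i> * c) * (\<Sum>i<n. \<Sum>t<n. M $$ (i,t) * \<rho> $$ (t,i))"
    using assms by (simp add: index_Theta sum.distrib sum_distrib_left)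
  also have "\<dots> = (1/2 + \<i> * c) * ctrace (\<rho> * M) + (1/2 - \<i> * c) * ctrace (M * \<rho>)"
    by (simp only: ctrace_mult[OF assms] ctrace_mult[OF assms(2,1)])
  finally show ?thesis
    using ctrace_mult_comm[OF assms(2,1)] by (simp add: algebra_simps)
qed

lemma adj_Theta:
  assumes "\<rho> \<in> carrier_mat n n" "M \<in> carrier_mat n n" "adj \<rho> = \<rho>"
  shows "adj (Theta c \<rho> M) = Theta c \<rho> (adj M)"
proof (rule eq_matI)
  have herm: "cnj (\<rho> $$ (k,i)) = \<rho> $$ (i,k)" if "i < n" "k < n" for i k
    using arg_cong[OF assms(3), of "\<lambda>A. A $$ (i,k)"] assms(1) that by simp
  fix i k assume "i < dim_row (Theta c \<rho> (adj M))" "k < dim_col (Theta c \<rho> (adj M))"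
  then have ik: "i < n" "k < n" using assms(1,2) by simp_all
  show "adj (Theta c \<rho> M) $$ (i,k) = Theta c \<rho> (adj M) $$ (i,k)"
    using assms(1,2) ik by (simp add: index_Theta cnj_sum herm algebra_simps)
qed (use assms(1,2) in simp_all)

lemma lin_map_Theta:
  assumes "\<rho> \<in> carrier_mat n n"
  shows "lin_map n n (Theta c \<rho>)"
  unfolding lin_map_def
proof (intro conjI ballI allI)
  fix X Y :: "complex mat" assume X: "X \<in> carrier_mat n n" and Y: "Y \<in> carrier_mat n n"
  have XY: "X + Y \<in> carrier_mat n n" using X Y by simp
  show "Theta c \<rho> (X + Y) = Theta c \<rho> X + Theta c \<rho> Y"
    using assms X Y by (intro eq_matI)
      (auto simp: index_Theta[OF assms XY] index_Theta[OF assms X] index_Theta[OF assms Y]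
        sum.distrib algebra_simps)
next
  fix X :: "complex mat" and a assume X: "X \<in> carrier_mat n n"
  have aX: "a \<cdot>\<^sub>m X \<in> carrier_mat n n" using X by simp
  show "Theta c \<rho> (a \<cdot>\<^sub>m X) = a \<cdot>\<^sub>m Theta c \<rho> X"
    using assms X by (intro eq_matI)
      (auto simp: index_Theta[OF assms aX] index_Theta[OF assms X] sum_distrib_left algebra_simps)
qed (use assms in simp)

lemma Theta_add_left:
  assumes "\<rho> \<in> carrier_mat n n" "\<sigma> \<in> carrier_mat n n" "M \<in> carrier_mat n n"
  shows "Theta c (\<rho> + \<sigma>) M = Theta c \<rho> M + Theta c \<sigma> M"
proof -
  have rs: "\<rho> + \<sigma> \<in> carrier_mat n n" using assms by simp
  show ?thesis
    using assms by (intro eq_matI) (auto simp: index_Theta[OF rs assms(3)] index_Theta[OF assms(1,3)]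
        index_Theta[OF assms(2,3)] sum.distrib algebra_simps)
qed

lemma Theta_smult_left:
  assumes "\<rho> \<in> carrier_mat n n" "M \<in> carrier_mat n n"
  shows "Theta c (a \<cdot>\<^sub>m \<rho>) M = a \<cdot>\<^sub>m Theta c \<rho> M"
proof -
  have a\<rho>: "a \<cdot>\<^sub>m \<rho> \<in> carrier_mat n n" using assms by simp
  show ?thesis
    using assms by (intro eq_matI) (auto simp: index_Theta[OF a\<rho> assms(2)] index_Theta[OF assms]
        sum_distrib_left algebra_simps)
qed

lemma star_carrier [simp]: "star c n m \<Phi> \<rho> \<in> carrier_mat (n * m) (n * m)"
  by (simp add: star_def tensor_id_right_def)

lemma block_snd_star:
  assumes "\<rho> \<in> carrier_mat n n" "b < m" "b' < m"
  shows "block_snd n m b b' (star c n m \<Phi> \<rho>) = Theta c \<rho> (block_snd n m b b' (jamiolkowski n m \<Phi>))"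
  unfolding star_def using assms by (intro block_snd_tensor_id_right) simp_all

lemma lin_map_star: "lin_map n (n * m) (star c n m \<Phi>)"
  unfolding lin_map_def
proof (intro conjI ballI allI)
  fix X Y :: "complex mat" assume X: "X \<in> carrier_mat n n" and Y: "Y \<in> carrier_mat n n"
  show "star c n m \<Phi> (X + Y) = star c n m \<Phi> X + star c n m \<Phi> Y"
    by (rule mat_eq_block_sndI[where n = n and m = m])
      (use X Y in \<open>simp_all add: block_snd_add block_snd_star Theta_add_left\<close>)
next
  fix X :: "complex mat" and a assume X: "X \<in> carrier_mat n n"
  show "star c n m \<Phi> (a \<cdot>\<^sub>m X) = a \<cdot>\<^sub>m star c n m \<Phi> X"
    by (rule mat_eq_block_sndI[where n = n and m = m])
      (use X in \<open>simp_all add: block_snd_smult block_snd_star Theta_smult_left\<close>)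
qed simp

lemma ptrace_fst_star:
  assumes "lin_map n m \<Phi>" "\<rho> \<in> carrier_mat n n"
  shows "ptrace_fst n m (star c n m \<Phi> \<rho>) = \<Phi> \<rho>"
proof (rule eq_matI)
  fix b b' assume "b < dim_row (\<Phi> \<rho>)" "b' < dim_col (\<Phi> \<rho>)"
  then have bb: "b < m" "b' < m" using lin_map_carrier[OF assms] by auto
  then show "ptrace_fst n m (star c n m \<Phi> \<rho>) $$ (b,b') = \<Phi> \<rho> $$ (b,b')"
    using assms
    by (simp add: index_ptrace_fst block_snd_star ctrace_Theta lin_map_index_ctrace_jamiolkowski)
qed (use lin_map_carrier[OF assms] in auto)

lemma ptrace_snd_star:
  assumes "channel n m \<Phi>" "\<rho> \<in> carrier_mat n n"
  shows "ptrace_snd n m (star c n m \<Phi> \<rho>) = \<rho>"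
proof -
  have "ptrace_snd n m (star c n m \<Phi> \<rho>) = Theta c \<rho> (1\<^sub>m n)"
    unfolding star_def
    by (simp add: ptrace_snd_tensor_id_right[OF lin_map_Theta[OF assms(2)]]
        ptrace_snd_jamiolkowski[OF assms(1)])
  also have "\<dots> = \<rho>"
    using assms(2) by (simp add: Theta_commute)
  finally show ?thesis .
qed

lemma adj_star:
  assumes "channel n m \<Phi>" "density n \<rho>"
  shows "adj (star c n m \<Phi> \<rho>) = star c n m \<Phi> \<rho>"
proof (rule mat_eq_block_sndI[where n = n and m = m])
  have \<rho>: "\<rho> \<in> carrier_mat n n" "adj \<rho> = \<rho>"
    using assms(2) density_carrier psd_adj by (auto simp: density_def)
  fix b b' assume bb: "b < m" "b' < m"
  have "adj (block_snd n m b' b (jamiolkowski n m \<Phi>)) = block_snd n m b b' (jamiolkowski n m \<Phi>)"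
    using bb by (simp flip: block_snd_adj add: adj_jamiolkowski[OF assms(1)])
  then show "block_snd n m b b' (adj (star c n m \<Phi> \<rho>)) = block_snd n m b b' (star c n m \<Phi> \<rho>)"
    using bb \<rho> by (simp add: block_snd_adj block_snd_star adj_Theta)
qed (simp_all add: adj_carrier)

lemma star_maximally_mixed:
  assumes "0 < n"
  shows "star c n m \<Phi> ((1 / of_nat n) \<cdot>\<^sub>m 1\<^sub>m n) = (1 / of_nat n) \<cdot>\<^sub>m jamiolkowski n m \<Phi>"
proof (rule mat_eq_block_sndI[where n = n and m = m])
  fix b b' assume bb: "b < m" "b' < m"
  show "block_snd n m b b' (star c n m \<Phi> ((1 / of_nat n) \<cdot>\<^sub>m 1\<^sub>m n))
      = block_snd n m b b' ((1 / of_nat n) \<cdot>\<^sub>m jamiolkowski n m \<Phi>)"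
    unfolding block_snd_star[OF smult_carrier_mat[OF one_carrier_mat] bb]
      block_snd_smult[OF jamiolkowski_carrier bb] by (rule Theta_scalar[OF block_snd_carrier])
qed (rule star_carrier, rule smult_carrier_mat[OF jamiolkowski_carrier])

lemma star_factorization:
  assumes "0 < n" "\<rho> \<in> carrier_mat n n"
  shows "star c n m \<Phi> \<rho> =
           tensor_id_right n n m (Theta c \<rho>) (of_nat n \<cdot>\<^sub>m star c n m \<Phi> ((1 / of_nat n) \<cdot>\<^sub>m 1\<^sub>m n))"
proof -
  have J: "of_nat n \<cdot>\<^sub>m star c n m \<Phi> ((1 / of_nat n) \<cdot>\<^sub>m 1\<^sub>m n) = jamiolkowski n m \<Phi>"
    using assms(1) by (simp add: star_maximally_mixed smult_smult_mat)
  show ?thesis by (subst J) (simp add: star_def)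
qed

lemma tensor_id_left_star_spec_right:
  "lin_map nE nE \<I> \<Longrightarrow> tensor_id_left (nA * nB) nE nE \<I> (star_spec_right c nA nB nE \<Phi> R)
     = star_spec_right c nA nB nE \<Phi> (tensor_id_left nA nE nE \<I> R)"
  unfolding star_spec_right_def by (rule tensor_id_left_tensor_id_right_commute[OF lin_map_star])

lemma ptrace_fst_star_spec_right:
  "lin_map nA nB \<Phi> \<Longrightarrow>
    ptrace_fst nA (nB * nE) (star_spec_right c nA nB nE \<Phi> R) = tensor_id_right nA nB nE \<Phi> R"
  unfolding star_spec_right_def ptrace_fst_tensor_id_right
  by (rule tensor_id_right_cong) (rule ptrace_fst_star)

lemma ptrace_mid_star_spec_left:
  assumes "lin_map nA nB \<E>" "lin_map nB nC \<F>" "\<rho> \<in> carrier_mat nA nA"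
  shows "ptrace_mid nA nB nC (star_spec_left c nA nB nC \<F> (star c nA nB \<E> \<rho>)) = star c nA nC (\<F> \<circ> \<E>) \<rho>"
proof -
  have "ptrace_mid nA nB nC (star_spec_left c nA nB nC \<F> (star c nA nB \<E> \<rho>))
      = tensor_id_left nA nB nC \<F> (tensor_id_right nA nA nB (Theta c \<rho>) (jamiolkowski nA nB \<E>))"
    unfolding star_spec_left_def ptrace_mid_tensor_id_left star_def[of _ nA nB \<E>]
    by (rule tensor_id_left_cong) (rule ptrace_fst_star[OF assms(2)])
  also have "\<dots> = tensor_id_right nA nA nC (Theta c \<rho>) (jamiolkowski nA nC (\<F> \<circ> \<E>))"
    unfolding tensor_id_left_tensor_id_right_commute[OF lin_map_Theta[OF assms(3)] assms(2)]
      jamiolkowski_comp[OF assms(1)] ..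
  finally show ?thesis unfolding star_def .
qed

section \<open>Orthogonal decompositions\<close>

lemma compress_expand_assoc:
  assumes V: "V \<in> carrier_mat n d" and K: "K \<in> carrier_mat n n"
  shows "V * (adj V * K * V) * adj V = V * adj V * K * (V * adj V)"
proof -
  have aV: "adj V \<in> carrier_mat d n" using V by simp
  have KV: "K * V \<in> carrier_mat n d" using K V by (rule mult_carrier_mat)
  have VV: "V * adj V \<in> carrier_mat n n" using V aV by (rule mult_carrier_mat)
  have KVV: "K * (V * adj V) \<in> carrier_mat n n" using K VV by (rule mult_carrier_mat)
  have X: "adj V * (K * V) \<in> carrier_mat d d" using aV KV by (rule mult_carrier_mat)
  show ?thesis
    by (simp only: assoc_mult_mat[OF aV K V] assoc_mult_mat[OF V X aV] assoc_mult_mat[OF aV KV aV]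
        assoc_mult_mat[OF K V aV] assoc_mult_mat[OF VV K VV] assoc_mult_mat[OF V aV KVV])
qed

lemma block_snd_kron_id_conj_star:
  assumes lin: "lin_map n m \<Phi>" and V: "V \<in> carrier_mat n d" and "0 < d" and bb: "b < m" "b' < m"
  shows "block_snd n m b b' (kron V (1\<^sub>m m) * star c d m (\<lambda>Y. \<Phi> (V * Y * adj V)) ((1 / of_nat d) \<cdot>\<^sub>m 1\<^sub>m d)
            * adj (kron V (1\<^sub>m m)))
       = (1 / of_nat d) \<cdot>\<^sub>m (V * adj V * block_snd n m b b' (jamiolkowski n m \<Phi>) * (V * adj V))"
proof -
  let ?K = "block_snd n m b b' (jamiolkowski n m \<Phi>)"
  have M: "adj V * ?K * V \<in> carrier_mat d d"
    using V by (meson adj_carrier block_snd_carrier mult_carrier_mat)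
  have "block_snd d m b b' (star c d m (\<lambda>Y. \<Phi> (V * Y * adj V)) ((1 / of_nat d) \<cdot>\<^sub>m 1\<^sub>m d))
      = (1 / of_nat d) \<cdot>\<^sub>m (adj V * ?K * V)"
    by (simp add: star_maximally_mixed[OF \<open>0 < d\<close>] block_snd_smult[OF jamiolkowski_carrier bb]
        block_snd_jamiolkowski_compress[OF lin V bb])
  then have "block_snd n m b b' (kron V (1\<^sub>m m) * star c d m (\<lambda>Y. \<Phi> (V * Y * adj V)) ((1 / of_nat d) \<cdot>\<^sub>m 1\<^sub>m d)
            * adj (kron V (1\<^sub>m m)))
      = V * ((1 / of_nat d) \<cdot>\<^sub>m (adj V * ?K * V)) * adj V"
    by (simp add: block_snd_kron_id_conj[OF V star_carrier bb])
  also have "\<dots> = (1 / of_nat d) \<cdot>\<^sub>m (V * (adj V * ?K * V) * adj V)"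
    unfolding mult_smult_distrib[OF V M]
    by (rule mult_smult_assoc_mat[OF mult_carrier_mat[OF V M] adj_carrier[OF V]])
  finally show ?thesis
    by (simp only: compress_expand_assoc[OF V block_snd_carrier])
qed

lemma orthogonal_projections_mult:
  assumes V: "\<forall>i<r. isometry n (d i) (V i)"
    and orth: "\<forall>i<r. \<forall>j<r. i \<noteq> j \<longrightarrow> adj (V i) * V j = 0\<^sub>m (d i) (d j)"
    and ij: "i < r" "j < r"
  shows "V i * adj (V i) * (V j * adj (V j)) = (if i = j then V j * adj (V j) else 0\<^sub>m n n)"
proof -
  have Vi: "V i \<in> carrier_mat n (d i)" and Vj: "V j \<in> carrier_mat n (d j)"
    using V ij by (simp_all add: isometry_def)
  have aVi: "adj (V i) \<in> carrier_mat (d i) n" and aVj: "adj (V j) \<in> carrier_mat (d j) n"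
    using Vi Vj by simp_all
  have "V i * adj (V i) * (V j * adj (V j)) = V i * (adj (V i) * V j * adj (V j))"
    by (simp only: assoc_mult_mat[OF Vi aVi mult_carrier_mat[OF Vj aVj]]
        assoc_mult_mat[OF aVi Vj aVj])
  also have "\<dots> = (if i = j then V j * adj (V j) else 0\<^sub>m n n)"
    using V orth ij Vi Vj aVj
    by (auto simp: isometry_def left_mult_zero_mat[OF aVj] right_mult_zero_mat[OF Vi])
  finally show ?thesis .
qed

lemma mat_sum_orthogonal_mult:
  assumes "finite I" and P: "\<forall>i\<in>I. P i \<in> carrier_mat n n"
    and PP: "\<forall>i\<in>I. \<forall>j\<in>I. P i * P j = (if i = j then P j else 0\<^sub>m n n)" and i: "i \<in> I"
  shows "mat_sum n n I (\<lambda>j. w j \<cdot>\<^sub>m P j) * P i = w i \<cdot>\<^sub>m P i"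
    and "P i * mat_sum n n I (\<lambda>j. w j \<cdot>\<^sub>m P j) = w i \<cdot>\<^sub>m P i"
proof -
  have Pi: "P i \<in> carrier_mat n n" using P i by simp
  have wP: "\<forall>j\<in>I. w j \<cdot>\<^sub>m P j \<in> carrier_mat n n" using P by simp
  have "(w j \<cdot>\<^sub>m P j) * P i = (if j = i then w i \<cdot>\<^sub>m P i else 0\<^sub>m n n)"
    and "P i * (w j \<cdot>\<^sub>m P j) = (if j = i then w i \<cdot>\<^sub>m P i else 0\<^sub>m n n)" if "j \<in> I" for j
    using PP P i that Pi
    by (auto simp: mult_smult_assoc_mat[of _ n n _ n] mult_smult_distrib[of _ n n _ n] intro!: eq_matI)
  then show "mat_sum n n I (\<lambda>j. w j \<cdot>\<^sub>m P j) * P i = w i \<cdot>\<^sub>m P i"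
    and "P i * mat_sum n n I (\<lambda>j. w j \<cdot>\<^sub>m P j) = w i \<cdot>\<^sub>m P i"
    using assms Pi by (auto simp: mat_sum_mult_right[OF Pi wP] mat_sum_mult_left[OF Pi wP]
        if_distrib[of "\<lambda>A. A $$ _"] cong: if_cong intro!: eq_matI)
qed

lemma pinching_commute:
  assumes \<rho>: "\<rho> \<in> carrier_mat n n" and K: "K \<in> carrier_mat n n" and P: "\<forall>i\<in>I. P i \<in> carrier_mat n n"
    and \<rho>P: "\<forall>i\<in>I. \<rho> * P i = w i \<cdot>\<^sub>m P i" and P\<rho>: "\<forall>i\<in>I. P i * \<rho> = w i \<cdot>\<^sub>m P i"
    and pinch: "K = mat_sum n n I (\<lambda>i. P i * K * P i)"
  shows "\<rho> * K = mat_sum n n I (\<lambda>i. w i \<cdot>\<^sub>m (P i * K * P i))"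
    and "K * \<rho> = mat_sum n n I (\<lambda>i. w i \<cdot>\<^sub>m (P i * K * P i))"
proof -
  have PKP: "\<forall>i\<in>I. P i * K * P i \<in> carrier_mat n n" using P K by (blast intro: mult_carrier_mat)
  have "\<rho> * (P i * K * P i) = w i \<cdot>\<^sub>m (P i * K * P i)" if "i \<in> I" for i
  proof -
    have Pi: "P i \<in> carrier_mat n n" using P that by simp
    have "\<rho> * (P i * K * P i) = \<rho> * P i * K * P i"
      by (simp only: assoc_mult_mat[OF \<rho> mult_carrier_mat[OF Pi K] Pi] assoc_mult_mat[OF \<rho> Pi K]
          assoc_mult_mat[OF Pi K Pi] assoc_mult_mat[OF mult_carrier_mat[OF \<rho> Pi] K Pi])
    also have "\<dots> = w i \<cdot>\<^sub>m (P i * K * P i)"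
      using \<rho>P that Pi K by (simp add: mult_smult_assoc_mat[of _ n n _ n])
    finally show ?thesis .
  qed
  moreover have "(P i * K * P i) * \<rho> = w i \<cdot>\<^sub>m (P i * K * P i)" if "i \<in> I" for i
  proof -
    have Pi: "P i \<in> carrier_mat n n" using P that by simp
    have "(P i * K * P i) * \<rho> = P i * K * (P i * \<rho>)"
      by (rule assoc_mult_mat[OF mult_carrier_mat[OF Pi K] Pi \<rho>])
    also have "\<dots> = w i \<cdot>\<^sub>m (P i * K * P i)"
      using P\<rho> that Pi K by (simp add: mult_smult_distrib[of _ n n _ n])
    finally show ?thesis .
  qed
  ultimately show "\<rho> * K = mat_sum n n I (\<lambda>i. w i \<cdot>\<^sub>m (P i * K * P i))"
    and "K * \<rho> = mat_sum n n I (\<lambda>i. w i \<cdot>\<^sub>m (P i * K * P i))"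
    by (subst pinch,
        simp add: mat_sum_mult_left[OF \<rho> PKP] mat_sum_mult_right[OF \<rho> PKP] cong: mat_sum_cong)+
qed

lemma star_block_diagonal:
  fixes p :: "nat \<Rightarrow> real"
  assumes lin: "lin_map n m \<Phi>"
    and V: "\<forall>i<r. 0 < d i \<and> isometry n (d i) (V i)"
    and orth: "\<forall>i<r. \<forall>j<r. i \<noteq> j \<longrightarrow> adj (V i) * V j = 0\<^sub>m (d i) (d j)"
    and inv: "\<forall>X \<in> carrier_mat n n.
           \<Phi> (mat_sum n n {..<r} (\<lambda>i. (V i * adj (V i)) * X * (V i * adj (V i)))) = \<Phi> X"
  shows "star c n m \<Phi> (mat_sum n n {..<r}
             (\<lambda>i. complex_of_real (p i / real (d i)) \<cdot>\<^sub>m (V i * adj (V i))))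
        = mat_sum (n * m) (n * m) {..<r} (\<lambda>i. complex_of_real (p i) \<cdot>\<^sub>m
             (kron (V i) (1\<^sub>m m) *
              star c (d i) m (\<lambda>Y. \<Phi> (V i * Y * adj (V i))) ((1 / of_nat (d i)) \<cdot>\<^sub>m 1\<^sub>m (d i)) *
              adj (kron (V i) (1\<^sub>m m))))"
    (is "star c n m \<Phi> ?\<rho> = mat_sum _ _ _ (\<lambda>i. _ \<cdot>\<^sub>m ?T i)")
proof (rule mat_eq_block_sndI[where n = n and m = m])
  define P where "P i = V i * adj (V i)" for i
  define w where "w i = complex_of_real (p i / real (d i))" for i
  have Vc: "V i \<in> carrier_mat n (d i)" if "i < r" for i using V that by (simp add: isometry_def)
  have P_carrier: "\<forall>i\<in>{..<r}. P i \<in> carrier_mat n n"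
    using Vc unfolding P_def by (meson adj_carrier lessThan_iff mult_carrier_mat)
  have PP: "\<forall>i\<in>{..<r}. \<forall>j\<in>{..<r}. P i * P j = (if i = j then P j else 0\<^sub>m n n)"
    using orthogonal_projections_mult[of r n d V] V orth by (simp add: P_def)
  have \<rho>: "?\<rho> = mat_sum n n {..<r} (\<lambda>i. w i \<cdot>\<^sub>m P i)" by (simp add: P_def w_def)
  fix b b' assume bb: "b < m" "b' < m"
  let ?K = "block_snd n m b b' (jamiolkowski n m \<Phi>)"
  have pinch: "?K = mat_sum n n {..<r} (\<lambda>i. P i * ?K * P i)"
    using block_snd_jamiolkowski_pinching[OF lin _ P_carrier _ bb] inv by (simp add: P_def)
  have commute: "?\<rho> * ?K = mat_sum n n {..<r} (\<lambda>i. w i \<cdot>\<^sub>m (P i * ?K * P i))"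
    "?K * ?\<rho> = mat_sum n n {..<r} (\<lambda>i. w i \<cdot>\<^sub>m (P i * ?K * P i))"
    unfolding \<rho> using mat_sum_orthogonal_mult[OF _ P_carrier PP]
    by (intro pinching_commute[OF mat_sum_carrier block_snd_carrier P_carrier _ _ pinch]; simp)+
  have "Theta c ?\<rho> ?K = ?\<rho> * ?K"
    by (rule Theta_commute[OF mat_sum_carrier block_snd_carrier]) (simp only: commute)
  then have "block_snd n m b b' (star c n m \<Phi> ?\<rho>) = mat_sum n n {..<r} (\<lambda>i. w i \<cdot>\<^sub>m (P i * ?K * P i))"
    unfolding block_snd_star[OF mat_sum_carrier bb] commute(1) .
  also have "\<dots> = block_snd n m b b' (mat_sum (n * m) (n * m) {..<r} (\<lambda>i. complex_of_real (p i) \<cdot>\<^sub>m ?T i))"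
  proof -
    have "block_snd n m b b' (complex_of_real (p i) \<cdot>\<^sub>m ?T i) = w i \<cdot>\<^sub>m (P i * ?K * P i)" if "i < r" for i
    proof -
      have "?T i \<in> carrier_mat (n * m) (n * m)"
        using Vc[OF that] by (meson adj_carrier kron_id_carrier mult_carrier_mat star_carrier)
      then show ?thesis
        using V that
        by (simp add: block_snd_smult bb block_snd_kron_id_conj_star[OF lin Vc[OF that] _ bb]
            P_def w_def of_real_divide smult_smult_mat)
    qed
    then show ?thesis unfolding block_snd_mat_sum[OF bb] by (intro mat_sum_cong) simp
  qed
  finally show "block_snd n m b b' (star c n m \<Phi> ?\<rho>)
      = block_snd n m b b' (mat_sum (n * m) (n * m) {..<r} (\<lambda>i. complex_of_real (p i) \<cdot>\<^sub>m ?T i))" .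
qed simp_all

theorem proposition9:
  fixes c :: real
  shows "state_over_time c \<and> axiom_H c \<and> axiom_E c \<and> axiom_P c \<and>
         axiom_CC c \<and> axiom_J c \<and> axiom_QC c"
proof (intro conjI)
  show "state_over_time c"
    unfolding state_over_time_def
    by (simp add: ptrace_fst_star ptrace_snd_star channel_lin_map density_carrier)
  show "axiom_H c"
    unfolding axiom_H_def by (blast intro: adj_star)
  show "axiom_E c"
    unfolding axiom_E_def
    by (simp add: tensor_id_left_star_spec_right ptrace_fst_star_spec_right cptni_lin_map channel_lin_map)
  show "axiom_P c"
    unfolding axiom_P_def by (simp add: ptrace_mid_star_spec_left channel_lin_map density_carrier)
  show "axiom_CC c"
    unfolding axiom_CC_def by (blast intro: star_block_diagonal channel_lin_map)
  show "axiom_J c"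
    unfolding axiom_J_def by (blast intro: star_maximally_mixed)
  show "axiom_QC c"
    unfolding axiom_QC_def
    by (blast intro: lin_map_Theta Theta_commute star_factorization density_carrier)
qed

end
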